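(* Let $(A,S,P)$ be a $\mathbb P$-contraction on a Hilbert space $\mathcal H$. There exists $X\in\mathcal B(\mathcal D_P)$ with numerical radius $\omega(X)\le1$ such that $I-A^*A-\frac14S^*S=D_PXD_P$ if and only if $\pm\big(I-A^*A-\frac14S^*S\big)\le D_P^2$; moreover such a solution $X$, when it exists, is unique. Furthermore, if such an $X$ exists, then $X\ge0$ if and only if $A^*A+\frac14S^*S\le I$ (i.e. $(A,S/2)$ is a spherical contraction).
   Context: The pentablock is $\mathbb P=\{(a_{21},\operatorname{tr}A_0,\det A_0): A_0=[a_{ij}]\in M_2(\mathbb C),\ \|A_0\|<1\}$; a $\mathbb P$-contraction is a commuting operator triple having $\overline{\mathbb P}$ as a spectral set (Taylor joint spectrum in $\overline{\mathbb P}$ and $\|f(A,S,P)\|\le\sup_{\overline{\mathbb P}}|f|$ for rational $f$ regular on $\overline{\mathbb P}$). $D_P=(I-P^*P)^{1/2}$ and $\mathcal D_P=\overline{\operatorname{Ran}}\,D_P$; in $D_PXD_P$, $D_P$ is regarded first as a map $\mathcal H\to\mathcal D_P$ and then as a map $\mathcal D_P\to\mathcal H$. *)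

theory Defs
  imports "HOL-Analysis.Analysis"
begin

text \<open>A complex Hilbert space: a complete normed space with a complex scalar
multiplication compatible with the real one, and a complex inner product
(linear in the second argument, conjugate-linear in the first) inducing the norm.\<close>

class chilbert = banach +
  fixes cscale :: "complex \<Rightarrow> 'a \<Rightarrow> 'a"
    and cinner :: "'a \<Rightarrow> 'a \<Rightarrow> complex"
  assumes cscale_add_right: "cscale c (x + y) = cscale c x + cscale c y"
    and cscale_add_left: "cscale (c + d) x = cscale c x + cscale d x"
    and cscale_cscale: "cscale c (cscale d x) = cscale (c * d) x"
    and cscale_one: "cscale 1 x = x"
    and scaleR_cscale: "scaleR r x = cscale (complex_of_real r) x"
    and cinner_commute: "cinner x y = cnj (cinner y x)"
    and cinner_add_right: "cinner x (y + z) = cinner x y + cinner x z"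
    and cinner_cscale_right: "cinner x (cscale c y) = c * cinner x y"
    and cinner_self_nonneg: "0 \<le> Re (cinner x x)"
    and norm_cinner: "norm x = sqrt (Re (cinner x x))"

definition bounded_op :: "('a::chilbert \<Rightarrow> 'a) \<Rightarrow> bool" where
  "bounded_op T \<longleftrightarrow> (\<forall>x y. T (x + y) = T x + T y) \<and>
     (\<forall>c x. T (cscale c x) = cscale c (T x)) \<and> (\<exists>K. \<forall>x. norm (T x) \<le> K * norm x)"

definition adj :: "('a::chilbert \<Rightarrow> 'a) \<Rightarrow> ('a \<Rightarrow> 'a)" where
  "adj T = (SOME T'. bounded_op T' \<and> (\<forall>x y. cinner (T' x) y = cinner x (T y)))"

definition op_le :: "('a::chilbert \<Rightarrow> 'a) \<Rightarrow> ('a \<Rightarrow> 'a) \<Rightarrow> bool" where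
  "op_le S T \<longleftrightarrow> (\<forall>x. Im (cinner x (T x - S x)) = 0 \<and> 0 \<le> Re (cinner x (T x - S x)))"

definition positive_op :: "('a::chilbert \<Rightarrow> 'a) \<Rightarrow> bool" where
  "positive_op T \<longleftrightarrow> op_le (\<lambda>x. 0) T"

definition op_sqrt :: "('a::chilbert \<Rightarrow> 'a) \<Rightarrow> ('a \<Rightarrow> 'a)" where
  "op_sqrt T = (THE R. bounded_op R \<and> positive_op R \<and> R \<circ> R = T)"

definition defect_op :: "('a::chilbert \<Rightarrow> 'a) \<Rightarrow> ('a \<Rightarrow> 'a)" where
  "defect_op P = op_sqrt (\<lambda>x. x - adj P (P x))"

definition defect_space :: "('a::chilbert \<Rightarrow> 'a) \<Rightarrow> 'a set" where
  "defect_space P = closure (range (defect_op P))"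

text \<open>Bounded operators on a (closed) subspace \<open>M\<close>, represented by functions on the
whole space whose behaviour outside \<open>M\<close> is irrelevant.\<close>
definition bounded_op_on :: "'a::chilbert set \<Rightarrow> ('a \<Rightarrow> 'a) \<Rightarrow> bool" where
  "bounded_op_on M X \<longleftrightarrow> (\<forall>x\<in>M. X x \<in> M) \<and>
     (\<forall>x\<in>M. \<forall>y\<in>M. X (x + y) = X x + X y) \<and>
     (\<forall>c. \<forall>x\<in>M. X (cscale c x) = cscale c (X x)) \<and>
     (\<exists>K. \<forall>x\<in>M. norm (X x) \<le> K * norm x)"

text \<open>Numerical radius of an operator on \<open>M\<close> (taken to be 0 when \<open>M = {0}\<close>).\<close>
definition numerical_radius :: "'a::chilbert set \<Rightarrow> ('a \<Rightarrow> 'a) \<Rightarrow> real" where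
  "numerical_radius M X = Sup (insert 0 {cmod (cinner x (X x)) | x. x \<in> M \<and> norm x = 1})"

definition positive_on :: "'a::chilbert set \<Rightarrow> ('a \<Rightarrow> 'a) \<Rightarrow> bool" where
  "positive_on M X \<longleftrightarrow> (\<forall>x\<in>M. Im (cinner x (X x)) = 0 \<and> 0 \<le> Re (cinner x (X x)))"

definition mat2_norm :: "complex \<Rightarrow> complex \<Rightarrow> complex \<Rightarrow> complex \<Rightarrow> real" where
  "mat2_norm a11 a12 a21 a22 =
     Sup {sqrt ((cmod (a11 * u + a12 * v))\<^sup>2 + (cmod (a21 * u + a22 * v))\<^sup>2) | u v.
            (cmod u)\<^sup>2 + (cmod v)\<^sup>2 = 1}"

definition pentablock :: "(complex \<times> complex \<times> complex) set" where
  "pentablock = {(a21, a11 + a22, a11 * a22 - a12 * a21) | a11 a12 a21 a22.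
                   mat2_norm a11 a12 a21 a22 < 1}"

text \<open>Exactness of the Koszul complex
  \<open>0 \<rightarrow> H \<rightarrow> H\<^sup>3 \<rightarrow> H\<^sup>3 \<rightarrow> H \<rightarrow> 0\<close> of the triple \<open>(a,b,c)\<close>.\<close>
definition koszul_d0 :: "('a::chilbert \<Rightarrow> 'a) \<Rightarrow> ('a \<Rightarrow> 'a) \<Rightarrow> ('a \<Rightarrow> 'a) \<Rightarrow> 'a \<Rightarrow> 'a \<times> 'a \<times> 'a" where
  "koszul_d0 a b c x = (a x, b x, c x)"

definition koszul_d1 :: "('a::chilbert \<Rightarrow> 'a) \<Rightarrow> ('a \<Rightarrow> 'a) \<Rightarrow> ('a \<Rightarrow> 'a) \<Rightarrow> 'a \<times> 'a \<times> 'a \<Rightarrow> 'a \<times> 'a \<times> 'a" where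
  "koszul_d1 a b c = (\<lambda>(x1, x2, x3). (a x2 - b x1, a x3 - c x1, b x3 - c x2))"

definition koszul_d2 :: "('a::chilbert \<Rightarrow> 'a) \<Rightarrow> ('a \<Rightarrow> 'a) \<Rightarrow> ('a \<Rightarrow> 'a) \<Rightarrow> 'a \<times> 'a \<times> 'a \<Rightarrow> 'a" where
  "koszul_d2 a b c = (\<lambda>(y12, y13, y23). c y12 - b y13 + a y23)"

definition koszul_exact :: "('a::chilbert \<Rightarrow> 'a) \<Rightarrow> ('a \<Rightarrow> 'a) \<Rightarrow> ('a \<Rightarrow> 'a) \<Rightarrow> bool" where
  "koszul_exact a b c \<longleftrightarrow>
     inj (koszul_d0 a b c) \<and>
     range (koszul_d0 a b c) = {v. koszul_d1 a b c v = 0} \<and>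
     range (koszul_d1 a b c) = {w. koszul_d2 a b c w = 0} \<and>
     surj (koszul_d2 a b c)"

definition taylor_spectrum :: "('a::chilbert \<Rightarrow> 'a) \<Rightarrow> ('a \<Rightarrow> 'a) \<Rightarrow> ('a \<Rightarrow> 'a) \<Rightarrow> (complex \<times> complex \<times> complex) set" where
  "taylor_spectrum a b c = {(l1, l2, l3). \<not> koszul_exact (\<lambda>x. a x - cscale l1 x)
        (\<lambda>x. b x - cscale l2 x) (\<lambda>x. c x - cscale l3 x)}"

text \<open>A polynomial in three variables is a finitely supported coefficient function.\<close>
definition poly3_eval :: "(nat \<times> nat \<times> nat \<Rightarrow> complex) \<Rightarrow> complex \<times> complex \<times> complex \<Rightarrow> complex" where
  "poly3_eval p = (\<lambda>(z1, z2, z3). \<Sum>(i, j, k)\<in>{m. p m \<noteq> 0}. p (i, j, k) * z1 ^ i * z2 ^ j * z3 ^ k)"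

definition poly3_op :: "(nat \<times> nat \<times> nat \<Rightarrow> complex) \<Rightarrow> ('a::chilbert \<Rightarrow> 'a) \<Rightarrow> ('a \<Rightarrow> 'a) \<Rightarrow> ('a \<Rightarrow> 'a) \<Rightarrow> 'a \<Rightarrow> 'a" where
  "poly3_op p a b c = (\<lambda>x. \<Sum>(i, j, k)\<in>{m. p m \<noteq> 0}. cscale (p (i, j, k)) ((a ^^ i) ((b ^^ j) ((c ^^ k) x))))"

definition rat3_op :: "(nat \<times> nat \<times> nat \<Rightarrow> complex) \<Rightarrow> (nat \<times> nat \<times> nat \<Rightarrow> complex) \<Rightarrow> ('a::chilbert \<Rightarrow> 'a) \<Rightarrow> ('a \<Rightarrow> 'a) \<Rightarrow> ('a \<Rightarrow> 'a) \<Rightarrow> 'a \<Rightarrow> 'a" where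
  "rat3_op p q a b c = poly3_op p a b c \<circ> inv (poly3_op q a b c)"

definition spectral_set :: "(complex \<times> complex \<times> complex) set \<Rightarrow> ('a::chilbert \<Rightarrow> 'a) \<Rightarrow> ('a \<Rightarrow> 'a) \<Rightarrow> ('a \<Rightarrow> 'a) \<Rightarrow> bool" where
  "spectral_set K a b c \<longleftrightarrow> taylor_spectrum a b c \<subseteq> K \<and>
     (\<forall>p q. finite {m. p m \<noteq> 0} \<longrightarrow> finite {m. q m \<noteq> 0} \<longrightarrow>
        (\<forall>z\<in>K. poly3_eval q z \<noteq> 0) \<longrightarrow>
        onorm (rat3_op p q a b c) \<le> Sup {cmod (poly3_eval p z / poly3_eval q z) | z. z \<in> K})"

definition P_contraction :: "('a::chilbert \<Rightarrow> 'a) \<Rightarrow> ('a \<Rightarrow> 'a) \<Rightarrow> ('a \<Rightarrow> 'a) \<Rightarrow> bool" where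
  "P_contraction A S P \<longleftrightarrow> bounded_op A \<and> bounded_op S \<and> bounded_op P \<and>
     A \<circ> S = S \<circ> A \<and> A \<circ> P = P \<circ> A \<and> S \<circ> P = P \<circ> S \<and>
     spectral_set (closure pentablock) A S P"

end

theory Submission
  imports Defs
begin

text \<open>The theorem holds for any bounded selfadjoint \<open>T\<close> and \<open>D\<close> in place of
  \<open>I - A\<^sup>*A - S\<^sup>*S/4\<close> and \<open>D\<^sub>P\<close>; the \<open>\<P>\<close>-contraction hypothesis is only used, through the
  spectral-set inequality for \<open>f(z) = z\<^sub>3\<close>, to see that \<open>P\<close> is a contraction, so that
  \<open>D\<^sub>P = (I - P\<^sup>*P)\<^sup>1\<^sup>/\<^sup>2\<close> is the sum of the binomial series of \<open>\<surd>(1 - t)\<close> at \<open>P\<^sup>*P\<close>.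

  If \<open>T = D X D\<close> then \<open>\<langle>x, T x\<rangle> = \<langle>D x, X D x\<rangle>\<close>, which is bounded by \<open>\<omega>(X) \<parallel>D x\<parallel>\<^sup>2\<close>.
  Conversely, \<open>\<plusminus>T \<le> D\<^sup>2\<close> gives, by polarization and rescaling, \<open>|\<langle>y, T x\<rangle>| \<le> \<parallel>D y\<parallel> \<parallel>D x\<parallel>\<close>.
  By the Riesz representation on the dense subspace \<open>range D\<close> of \<open>\<D>\<close> this yields a lift
  \<open>Z\<close> with \<open>D Z = T\<close> and \<open>\<parallel>Z x\<parallel> \<le> \<parallel>D x\<parallel>\<close>, and \<open>X\<close> is the adjoint of the contraction
  \<open>D x \<mapsto> Z x\<close>, so \<open>\<parallel>X\<parallel> \<le> 1\<close>. Since \<open>D\<close> is injective on \<open>\<D>\<close>, \<open>T\<close> determines \<open>X\<close> on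
  \<open>range D\<close>, and by continuity on \<open>\<D>\<close>; this gives uniqueness, and \<open>X \<ge> 0\<close> iff
  \<open>\<langle>x, T x\<rangle> \<ge> 0\<close> for all \<open>x\<close>.\<close>

section \<open>Complex inner product spaces\<close>

lemma cscale_zero_left [simp]: "cscale 0 x = 0"
  using scaleR_cscale[of 0 x] by simp

lemma cscale_zero_right [simp]: "cscale c 0 = 0"
  using cscale_add_right[of c 0 0] by simp

lemma cscale_minus_left: "cscale (- c) x = - cscale c x"
proof -
  have "cscale (- c) x + cscale c x = 0"
    by (simp only: cscale_add_left[symmetric] add.left_inverse cscale_zero_left)
  then show ?thesis by (simp add: eq_neg_iff_add_eq_0)
qed

lemma cscale_minus_one: "cscale (- 1) x = - x"
  by (simp add: cscale_minus_left cscale_one)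

lemma cinner_add_left: "cinner (x + y) z = cinner x z + cinner y z"
  by (metis cinner_add_right cinner_commute complex_cnj_add)

lemma cinner_cscale_left: "cinner (cscale c x) y = cnj c * cinner x y"
  by (metis cinner_cscale_right cinner_commute complex_cnj_mult)

lemma cinner_zero_right [simp]: "cinner x 0 = 0"
  using cinner_add_right[of x 0 0] by simp

lemma cinner_zero_left [simp]: "cinner 0 x = 0"
  by (metis cinner_commute cinner_zero_right complex_cnj_zero)

lemma cinner_minus_right: "cinner x (- y) = - cinner x y"
proof -
  have "cinner x (- y) + cinner x y = 0"
    by (simp only: cinner_add_right[symmetric] add.left_inverse cinner_zero_right)
  then show ?thesis by (simp add: eq_neg_iff_add_eq_0)
qed

lemma cinner_minus_left: "cinner (- x) y = - cinner x y"
  by (metis cinner_commute cinner_minus_right complex_cnj_minus)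

lemma cinner_diff_right: "cinner x (y - z) = cinner x y - cinner x z"
  by (simp only: diff_conv_add_uminus cinner_add_right cinner_minus_right)

lemma cinner_diff_left: "cinner (x - y) z = cinner x z - cinner y z"
  by (simp only: diff_conv_add_uminus cinner_add_left cinner_minus_left)

lemma cinner_scaleR_right: "cinner x (scaleR r y) = complex_of_real r * cinner x y"
  by (simp only: scaleR_cscale cinner_cscale_right)

lemma cinner_scaleR_left: "cinner (scaleR r x) y = complex_of_real r * cinner x y"
  by (simp only: scaleR_cscale cinner_cscale_left complex_cnj_complex_of_real)

lemma Im_eq_0_if_cnj_eq: "cnj z = z \<Longrightarrow> Im z = 0"
  by (metis Reals_cnj_iff complex_is_Real_iff)

lemma Im_cinner_self [simp]: "Im (cinner x x) = 0"
  by (metis Im_eq_0_if_cnj_eq cinner_commute)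

lemma cinner_self: "cinner x x = complex_of_real ((norm x)\<^sup>2)"
  using norm_cinner[of x] cinner_self_nonneg[of x] by (simp add: complex_eq_iff)

lemma Re_cinner_self: "Re (cinner x x) = (norm x)\<^sup>2"
  by (simp add: cinner_self)

lemma cinner_self_eq_0 [simp]: "cinner x x = 0 \<longleftrightarrow> x = 0"
  by (simp add: cinner_self)

lemma cmod_cinner_commute: "cmod (cinner x y) = cmod (cinner y x)"
  by (subst cinner_commute) simp

lemma Re_cinner_commute: "Re (cinner x y) = Re (cinner y x)"
  by (subst cinner_commute) simp

lemma norm_cscale: "norm (cscale c x) = cmod c * norm x"
proof -
  have "cinner (cscale c x) (cscale c x) = (cnj c * c) * cinner x x"
    by (simp add: cinner_cscale_left cinner_cscale_right ac_simps)
  also have "\<dots> = complex_of_real ((cmod c * norm x)\<^sup>2)"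
    using complex_norm_square[of c] by (simp add: cinner_self mult.commute power_mult_distrib)
  finally have "(norm (cscale c x))\<^sup>2 = (cmod c * norm x)\<^sup>2"
    by (metis cinner_self of_real_eq_iff)
  then show ?thesis
    by (meson mult_nonneg_nonneg norm_ge_zero power2_eq_imp_eq)
qed

lemma cmod_cinner_le: "cmod (cinner x y) \<le> norm x * norm y"
proof (cases "y = 0")
  case False
  define a where "a = cinner x y"
  define n where "n = (norm y)\<^sup>2"
  define t where "t = cnj a / complex_of_real n"
  have n: "n > 0" using False by (simp add: n_def)
  \<comment> \<open>expand \<open>0 \<le> \<parallel>x - t y\<parallel>\<^sup>2\<close> for the minimizing \<open>t\<close>\<close>
  have "cinner (x - cscale t y) (x - cscale t y)
      = cinner x x - (t * a + cnj t * cnj a - cnj t * t * of_real n)"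
    unfolding cinner_diff_left cinner_diff_right cinner_cscale_left cinner_cscale_right
    by (simp add: a_def n_def cinner_self[of y] cinner_commute[of y x] algebra_simps)
  also have "t * a + cnj t * cnj a - cnj t * t * of_real n = of_real ((cmod a)\<^sup>2 / n)"
    using n complex_norm_square[of a] by (simp add: t_def field_simps)
  finally have "0 \<le> (norm x)\<^sup>2 - (cmod a)\<^sup>2 / n"
    using cinner_self_nonneg[of "x - cscale t y"] by (simp add: cinner_self)
  then have "(cmod a)\<^sup>2 \<le> (norm x * norm y)\<^sup>2"
    using n by (simp add: n_def field_simps power_mult_distrib)
  then show ?thesis unfolding a_def
    by (meson mult_nonneg_nonneg norm_ge_zero power2_le_imp_le)
qed simp

lemma bounded_bilinear_cinner: "bounded_bilinear (cinner :: 'a::chilbert \<Rightarrow> 'a \<Rightarrow> complex)"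
proof
  fix a a' b b' :: 'a and r :: real
  show "cinner (a + a') b = cinner a b + cinner a' b" by (rule cinner_add_left)
  show "cinner a (b + b') = cinner a b + cinner a b'" by (rule cinner_add_right)
  show "cinner (r *\<^sub>R a) b = r *\<^sub>R cinner a b" by (simp add: cinner_scaleR_left scaleR_conv_of_real)
  show "cinner a (r *\<^sub>R b) = r *\<^sub>R cinner a b" by (simp add: cinner_scaleR_right scaleR_conv_of_real)
  show "\<exists>K. \<forall>a b. norm (cinner a b) \<le> norm a * norm b * K"
    by (rule exI[of _ 1]) (simp add: cmod_cinner_le)
qed

lemma bounded_linear_cscale: "bounded_linear (cscale c :: 'a::chilbert \<Rightarrow> 'a)"
proof
  fix x y :: 'a and r :: real
  show "cscale c (x + y) = cscale c x + cscale c y" by (rule cscale_add_right)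
  show "cscale c (r *\<^sub>R x) = r *\<^sub>R cscale c x"
    by (simp add: scaleR_cscale cscale_cscale mult.commute)
  show "\<exists>K. \<forall>x. norm (cscale c x) \<le> norm x * K"
    by (rule exI[of _ "cmod c"]) (simp add: norm_cscale mult.commute)
qed

lemma cinner_ext: "(\<And>y. cinner x y = cinner x' y) \<Longrightarrow> x = x'"
  by (metis cinner_diff_left cinner_self_eq_0 right_minus_eq)

lemma norm_add_sq: "(norm (x + y))\<^sup>2 = (norm x)\<^sup>2 + 2 * Re (cinner x y) + (norm (y::'a::chilbert))\<^sup>2"
  by (simp add: Re_cinner_self[symmetric] cinner_add_left cinner_add_right Re_cinner_commute[of y x])

lemma norm_diff_sq: "(norm (x - y))\<^sup>2 = (norm x)\<^sup>2 - 2 * Re (cinner x y) + (norm (y::'a::chilbert))\<^sup>2"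
  by (simp add: Re_cinner_self[symmetric] cinner_diff_left cinner_diff_right Re_cinner_commute[of y x])

lemma parallelogram_law:
  "(norm (x + y))\<^sup>2 + (norm (x - y))\<^sup>2 = 2 * (norm x)\<^sup>2 + 2 * (norm (y::'a::chilbert))\<^sup>2"
  by (simp add: norm_add_sq norm_diff_sq)

section \<open>Closed subspaces and the Riesz representation\<close>

definition csubspace :: "'a::chilbert set \<Rightarrow> bool" where
  "csubspace V \<longleftrightarrow> 0 \<in> V \<and> (\<forall>x\<in>V. \<forall>y\<in>V. x + y \<in> V) \<and> (\<forall>c. \<forall>x\<in>V. cscale c x \<in> V)"

lemma csubspace_0: "csubspace V \<Longrightarrow> 0 \<in> V"
  by (simp add: csubspace_def)

lemma csubspace_add: "csubspace V \<Longrightarrow> x \<in> V \<Longrightarrow> y \<in> V \<Longrightarrow> x + y \<in> V"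
  by (simp add: csubspace_def)

lemma csubspace_cscale: "csubspace V \<Longrightarrow> x \<in> V \<Longrightarrow> cscale c x \<in> V"
  by (simp add: csubspace_def)

lemma csubspace_diff: "csubspace V \<Longrightarrow> x \<in> V \<Longrightarrow> y \<in> V \<Longrightarrow> x - y \<in> V"
  by (metis csubspace_add csubspace_cscale cscale_minus_one diff_conv_add_uminus)

lemma csubspace_scaleR: "csubspace V \<Longrightarrow> x \<in> V \<Longrightarrow> scaleR r x \<in> V"
  by (simp add: scaleR_cscale csubspace_cscale)

lemma csubspace_UNIV: "csubspace UNIV"
  by (simp add: csubspace_def)

lemma csubspace_closure:
  assumes "csubspace V" shows "csubspace (closure V)"
  unfolding csubspace_def
proof (intro conjI ballI allI)
  show "0 \<in> closure V" using csubspace_0[OF assms] closure_subset by blast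
next
  fix x y assume "x \<in> closure V" "y \<in> closure V"
  then obtain X Y where X: "\<forall>n. X n \<in> V" "X \<longlonglongrightarrow> x" and Y: "\<forall>n. Y n \<in> V" "Y \<longlonglongrightarrow> y"
    unfolding closure_sequential by blast
  have "(\<lambda>n. X n + Y n) \<longlonglongrightarrow> x + y" using X Y by (intro tendsto_add) auto
  moreover have "\<forall>n. X n + Y n \<in> V" using X Y csubspace_add[OF assms] by blast
  ultimately show "x + y \<in> closure V"
    unfolding closure_sequential by (intro exI[where x="\<lambda>n. X n + Y n"]) blast
next
  fix c x assume "x \<in> closure V"
  then obtain X where X: "\<forall>n. X n \<in> V" "X \<longlonglongrightarrow> x"
    unfolding closure_sequential by blast
  have "(\<lambda>n. cscale c (X n)) \<longlonglongrightarrow> cscale c x"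
    using X by (intro bounded_linear.tendsto[OF bounded_linear_cscale]) auto
  moreover have "\<forall>n. cscale c (X n) \<in> V" using X csubspace_cscale[OF assms] by blast
  ultimately show "cscale c x \<in> closure V"
    unfolding closure_sequential by (intro exI[where x="\<lambda>n. cscale c (X n)"]) blast
qed

lemma nonneg_quadratic_imp_linear_coeff_0:
  fixes r s :: real
  assumes "s \<ge> 0" "\<And>t. 0 \<le> t\<^sup>2 * s - 2 * t * r"
  shows "r = 0"
proof -
  define t where "t = r / (s + 1)"
  have "0 \<le> t\<^sup>2 * s - 2 * t * r" by (rule assms(2))
  then have "0 \<le> (t\<^sup>2 * s - 2 * t * r) * (s + 1)\<^sup>2" by simp
  also have "(t\<^sup>2 * s - 2 * t * r) * (s + 1)\<^sup>2 = - (r\<^sup>2 * (s + 2))"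
  proof -
    have "t * (s + 1) = r" using assms(1) by (simp add: t_def)
    moreover have "(t\<^sup>2 * s - 2 * t * r) * (s + 1)\<^sup>2 = s * (t * (s + 1))\<^sup>2 - 2 * r * (s + 1) * (t * (s + 1))"
      by (simp add: power2_eq_square algebra_simps)
    ultimately show ?thesis by (simp add: power2_eq_square algebra_simps)
  qed
  finally have "r\<^sup>2 * (s + 2) \<le> 0" by simp
  then show ?thesis using assms(1) by (simp add: mult_le_0_iff)
qed

lemma dist_near_minimizers_le:
  assumes N: "csubspace N" and a: "a \<in> N" and b: "b \<in> N" and d: "0 \<le> d"
    and dle: "\<And>n. n \<in> N \<Longrightarrow> d \<le> norm (x - n)"
    and a_near: "(norm (x - a))\<^sup>2 \<le> d\<^sup>2 + \<delta>" and b_near: "(norm (x - b))\<^sup>2 \<le> d\<^sup>2 + \<delta>"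
  shows "(dist a b)\<^sup>2 \<le> 4 * \<delta>"
proof -
  \<comment> \<open>the midpoint of \<open>a\<close> and \<open>b\<close> lies in \<open>N\<close>, so the parallelogram law applies\<close>
  have "(x - a) + (x - b) = 2 *\<^sub>R (x - scaleR (1/2) (a + b))" by (simp add: algebra_simps scaleR_2)
  moreover have "d \<le> norm (x - scaleR (1/2) (a + b))"
    using a b N by (intro dle csubspace_scaleR csubspace_add)
  ultimately have "(2 * d)\<^sup>2 \<le> (norm ((x - a) + (x - b)))\<^sup>2"
    using d by (simp add: power_mono)
  moreover have "(norm ((x - a) - (x - b)))\<^sup>2
      = 2 * (norm (x - a))\<^sup>2 + 2 * (norm (x - b))\<^sup>2 - (norm ((x - a) + (x - b)))\<^sup>2"
    using parallelogram_law[of "x - a" "x - b"] by simp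
  ultimately show ?thesis
    using a_near b_near by (simp add: dist_norm norm_minus_commute power_mult_distrib)
qed

lemma exists_near_minimizer:
  assumes "N \<noteq> {}" "e > 0"
  shows "\<exists>n\<in>N. (norm (x - n))\<^sup>2 < (Inf ((\<lambda>n. norm (x - n)) ` N))\<^sup>2 + e"
proof -
  let ?d = "Inf ((\<lambda>n. norm (x - n)) ` N)"
  have "?d < sqrt (?d\<^sup>2 + e)" using assms(2) by (intro real_less_rsqrt) simp
  from cInf_lessD[OF _ this] assms(1) obtain n where n: "n \<in> N" "norm (x - n) < sqrt (?d\<^sup>2 + e)"
    by blast
  then have "sqrt ((norm (x - n))\<^sup>2) < sqrt (?d\<^sup>2 + e)" by simp
  then have "(norm (x - n))\<^sup>2 < ?d\<^sup>2 + e" by (simp only: real_sqrt_less_iff)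
  then show ?thesis using n(1) by blast
qed

lemma nearest_point_exists:
  fixes x :: "'a::chilbert"
  assumes N: "csubspace N" "closed N"
  shows "\<exists>a\<in>N. \<forall>n\<in>N. norm (x - a) \<le> norm (x - n)"
proof -
  define d where "d = Inf ((\<lambda>n. norm (x - n)) ` N)"
  have ne: "N \<noteq> {}" using csubspace_0[OF N(1)] by blast
  have bdd: "bdd_below ((\<lambda>n. norm (x - n)) ` N)" by (rule bdd_belowI[where m=0]) auto
  have dle: "d \<le> norm (x - n)" if "n \<in> N" for n
    unfolding d_def using bdd that by (intro cInf_lower) auto
  have d0: "0 \<le> d" unfolding d_def using ne by (intro cInf_greatest) auto
  \<comment> \<open>nested closed sets of near-minimizers with diameters tending to zero\<close>
  define S where "S k = N \<inter> {n. (norm (x - n))\<^sup>2 \<le> d\<^sup>2 + inverse (real (Suc k))}" for k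
  have Sclosed: "closed (S k)" for k
    unfolding S_def by (intro closed_Int N(2) closed_Collect_le continuous_intros)
  have Sne: "S k \<noteq> {}" for k
    using exists_near_minimizer[OF ne, of "inverse (real (Suc k))" x] unfolding S_def d_def
    by (auto dest: less_imp_le)
  have Sdec: "S k \<subseteq> S m" if "m \<le> k" for m k
  proof -
    have "inverse (real (Suc k)) \<le> inverse (real (Suc m))" using that by (simp add: le_imp_inverse_le)
    then have "(norm (x - y))\<^sup>2 \<le> d\<^sup>2 + inverse (real (Suc m))"
      if "(norm (x - y))\<^sup>2 \<le> d\<^sup>2 + inverse (real (Suc k))" for y
      using that by linarith
    then show ?thesis unfolding S_def by blast
  qed
  have Sdiam: "\<exists>k. \<forall>a\<in>S k. \<forall>b\<in>S k. dist a b < \<epsilon>" if "\<epsilon> > 0" for \<epsilon>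
  proof -
    have "\<epsilon>\<^sup>2 / 4 > 0" using that by simp
    from reals_Archimedean[OF this] obtain k where k: "inverse (real (Suc k)) < \<epsilon>\<^sup>2 / 4" by blast
    have "dist a b < \<epsilon>" if "a \<in> S k" "b \<in> S k" for a b
    proof -
      have "(dist a b)\<^sup>2 \<le> 4 * inverse (real (Suc k))"
        by (rule dist_near_minimizers_le[OF N(1) _ _ d0 dle]) (use that in \<open>auto simp: S_def\<close>)
      also have "\<dots> < \<epsilon>\<^sup>2" using k by simp
      finally show ?thesis by (rule power_less_imp_less_base) (use \<open>\<epsilon> > 0\<close> in simp)
    qed
    then show ?thesis by blast
  qed
  obtain a where aS: "\<And>k. a \<in> S k"
    using decreasing_closed_nest[of S, OF Sclosed Sne Sdec Sdiam] by blast
  have "(norm (x - a))\<^sup>2 \<le> d\<^sup>2"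
  proof (rule field_le_epsilon)
    fix e :: real assume "e > 0"
    then obtain k where k: "inverse (real (Suc k)) < e" using reals_Archimedean by blast
    then show "(norm (x - a))\<^sup>2 \<le> d\<^sup>2 + e" using aS[of k] unfolding S_def by auto
  qed
  then have "norm (x - a) \<le> d" using d0 by (rule power2_le_imp_le)
  moreover have "a \<in> N" using aS[of 0] unfolding S_def by auto
  ultimately show ?thesis using dle by (meson order_trans)
qed

lemma nearest_point_orthogonal:
  assumes N: "csubspace N" and a: "a \<in> N" and min: "\<And>n. n \<in> N \<Longrightarrow> norm (x - a) \<le> norm (x - n)"
    and n: "n \<in> N"
  shows "cinner n (x - a) = 0"
proof -
  \<comment> \<open>moving from \<open>a\<close> along \<open>n\<close> never decreases the distance to \<open>x\<close>\<close>
  have Re0: "Re (cinner n (x - a)) = 0" if "n \<in> N" for n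
  proof (rule nonneg_quadratic_imp_linear_coeff_0[of "(norm n)\<^sup>2"])
    fix t :: real
    have "(norm (x - a))\<^sup>2 \<le> (norm ((x - a) - scaleR t n))\<^sup>2"
      using min[of "a + scaleR t n"] a that N
      by (simp add: csubspace_add csubspace_scaleR diff_diff_eq power_mono)
    also have "\<dots> = (norm (x - a))\<^sup>2 - 2 * (t * Re (cinner n (x - a))) + t\<^sup>2 * (norm n)\<^sup>2"
      by (simp add: norm_diff_sq cinner_scaleR_right power_mult_distrib Re_cinner_commute[of n])
    finally show "0 \<le> t\<^sup>2 * (norm n)\<^sup>2 - 2 * t * Re (cinner n (x - a))" by simp
  qed simp
  have "Im (cinner n (x - a)) = 0"
    using Re0[OF csubspace_cscale[OF N n, of \<i>]] by (simp add: cinner_cscale_left)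
  then show ?thesis using Re0[OF n] by (simp add: complex_eq_iff)
qed

lemma orthogonal_projection_exists:
  assumes "csubspace N" "closed N"
  shows "\<exists>p\<in>N. \<forall>n\<in>N. cinner n (x - p) = 0"
  using nearest_point_exists[OF assms, of x] nearest_point_orthogonal[OF assms(1)] by blast

lemma cmod_cinner_le_on_closure:
  assumes "\<And>v. v \<in> V \<Longrightarrow> cmod (cinner z v) \<le> K * norm v" and "v \<in> closure V"
  shows "cmod (cinner z v) \<le> K * norm v"
proof -
  have "closure V \<subseteq> {y. cmod (cinner z y) \<le> K * norm y}"
  proof (rule closure_minimal)
    show "closed {y. cmod (cinner z y) \<le> K * norm y}"
      by (intro closed_Collect_le continuous_intros bounded_bilinear.continuous_on[OF bounded_bilinear_cinner])
  qed (use assms(1) in auto)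
  then show ?thesis using assms(2) by blast
qed

lemma additive_on_diff:
  fixes f :: "'a::chilbert \<Rightarrow> 'b::ab_group_add"
  assumes "csubspace V" and "\<And>x y. x \<in> V \<Longrightarrow> y \<in> V \<Longrightarrow> f (x + y) = f x + f y"
    and "x \<in> V" "y \<in> V"
  shows "f (x - y) = f x - f y"
  using assms(2)[of "x - y" y] assms by (simp add: csubspace_diff eq_diff_eq)

lemma csubspace_kernel:
  fixes f :: "'a::chilbert \<Rightarrow> complex"
  assumes V: "csubspace V"
    and f_add: "\<And>x y. x \<in> V \<Longrightarrow> y \<in> V \<Longrightarrow> f (x + y) = f x + f y"
    and f_cscale: "\<And>c x. x \<in> V \<Longrightarrow> f (cscale c x) = c * f x"
  shows "csubspace {v\<in>V. f v = 0}"
  unfolding csubspace_def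
proof (intro conjI ballI allI)
  show "0 \<in> {v\<in>V. f v = 0}" using csubspace_0[OF V] f_cscale[of 0 0] by simp
  show "x + y \<in> {v\<in>V. f v = 0}" if "x \<in> {v\<in>V. f v = 0}" "y \<in> {v\<in>V. f v = 0}" for x y
    using that V by (simp add: f_add csubspace_add)
  show "cscale c x \<in> {v\<in>V. f v = 0}" if "x \<in> {v\<in>V. f v = 0}" for c x
    using that V by (simp add: f_cscale csubspace_cscale)
qed

lemma not_in_closure_kernel:
  fixes f :: "'a::chilbert \<Rightarrow> complex"
  assumes V: "csubspace V"
    and f_add: "\<And>x y. x \<in> V \<Longrightarrow> y \<in> V \<Longrightarrow> f (x + y) = f x + f y"
    and f_bound: "\<And>x. x \<in> V \<Longrightarrow> cmod (f x) \<le> K * norm x" and K: "0 \<le> K"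
    and v: "v \<in> V" "f v = 1"
  shows "v \<notin> closure {u\<in>V. f u = 0}"
proof
  assume "v \<in> closure {u\<in>V. f u = 0}"
  moreover have "1 / (K + 1) > 0" using K by simp
  ultimately obtain k where k: "k \<in> V" "f k = 0" "dist k v < 1 / (K + 1)"
    unfolding closure_approachable by blast
  have "1 = cmod (f (v - k))" using additive_on_diff[OF V f_add v(1) k(1)] k(2) v(2) by simp
  also have "\<dots> \<le> K * norm (v - k)" using v(1) k(1) by (intro f_bound csubspace_diff[OF V])
  also have "\<dots> \<le> K * (1 / (K + 1))" using k(3) K
    by (intro mult_left_mono) (auto simp: dist_norm norm_minus_commute[of v k])
  also have "\<dots> < 1" using K by (simp add: field_simps)
  finally show False by simp
qed

lemma cinner_orthogonal_kernel:
  fixes f :: "'a::chilbert \<Rightarrow> complex"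
  assumes V: "csubspace V"
    and f_add: "\<And>x y. x \<in> V \<Longrightarrow> y \<in> V \<Longrightarrow> f (x + y) = f x + f y"
    and f_cscale: "\<And>c x. x \<in> V \<Longrightarrow> f (cscale c x) = c * f x"
    and v1: "v1 \<in> V" "f v1 = 1" and orth: "\<And>u. u \<in> V \<Longrightarrow> f u = 0 \<Longrightarrow> cinner u w = 0"
    and v: "v \<in> V"
  shows "cinner w v = f v * cinner w v1"
proof -
  define u where "u = v - cscale (f v) v1"
  have sV: "cscale (f v) v1 \<in> V" using V v1(1) by (rule csubspace_cscale)
  have "f u = f v - f (cscale (f v) v1)" unfolding u_def by (rule additive_on_diff[OF V f_add v sV])
  then have "f u = 0" using f_cscale[OF v1(1), of "f v"] v1(2) by simp
  moreover have "u \<in> V" unfolding u_def using V v sV by (rule csubspace_diff)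
  ultimately have "cinner u w = 0" by (rule orth[rotated])
  then have "cinner w u = 0" by (metis cinner_commute complex_cnj_zero)
  then show ?thesis unfolding u_def by (simp add: cinner_diff_right cinner_cscale_right)
qed

lemma riesz_representation_dense:
  fixes f :: "'a::chilbert \<Rightarrow> complex"
  assumes V: "csubspace V"
    and f_add: "\<And>x y. x \<in> V \<Longrightarrow> y \<in> V \<Longrightarrow> f (x + y) = f x + f y"
    and f_cscale: "\<And>c x. x \<in> V \<Longrightarrow> f (cscale c x) = c * f x"
    and f_bound: "\<And>x. x \<in> V \<Longrightarrow> cmod (f x) \<le> K * norm x"
    and K: "0 \<le> K"
  shows "\<exists>z\<in>closure V. (\<forall>v\<in>V. f v = cinner z v) \<and> norm z \<le> K"
proof (cases "\<forall>v\<in>V. f v = 0")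
  case True
  then show ?thesis using csubspace_0[OF csubspace_closure[OF V]] K by (intro bexI[of _ 0]) auto
next
  case False
  then obtain v0 where v0: "v0 \<in> V" "f v0 \<noteq> 0" by blast
  define v1 where "v1 = cscale (inverse (f v0)) v0"
  have v1: "v1 \<in> V" "f v1 = 1" unfolding v1_def using V v0 by (simp_all add: csubspace_cscale f_cscale)
  define ker where "ker = {v\<in>V. f v = 0}"
  have "csubspace ker"
    unfolding ker_def using V f_add f_cscale by (rule csubspace_kernel)
  then obtain p where p: "p \<in> closure ker" and orth: "\<And>n. n \<in> closure ker \<Longrightarrow> cinner n (v1 - p) = 0"
    using orthogonal_projection_exists[OF csubspace_closure closed_closure] by blast
  define w where "w = v1 - p"
  have "w \<noteq> 0"
    using not_in_closure_kernel[OF V f_add f_bound K v1] p unfolding w_def ker_def by auto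
  have w_repr: "cinner w v = f v * cinner w v1" if "v \<in> V" for v
    using V f_add f_cscale v1 _ that
  proof (rule cinner_orthogonal_kernel)
    fix u assume "u \<in> V" "f u = 0"
    then have "u \<in> closure ker" unfolding ker_def by (simp add: closure_subset[THEN subsetD])
    then show "cinner u w = 0" unfolding w_def by (rule orth)
  qed
  have "cinner p w = 0" using orth[OF p] unfolding w_def .
  then have "cinner w p = 0" by (subst cinner_commute) simp
  moreover have "v1 = w + p" unfolding w_def by simp
  ultimately have w_v1: "cinner w v1 = complex_of_real ((norm w)\<^sup>2)"
    by (simp add: cinner_add_right cinner_self)
  define z where "z = cscale (complex_of_real (inverse ((norm w)\<^sup>2))) w"
  have repr: "f v = cinner z v" if "v \<in> V" for v
    using w_repr[OF that] w_v1 \<open>w \<noteq> 0\<close> unfolding z_def by (simp add: cinner_cscale_left)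
  have zV: "z \<in> closure V"
  proof -
    have "v1 \<in> closure V" "p \<in> closure V"
      using v1(1) p closure_mono[of ker V] closure_subset unfolding ker_def by auto
    then show ?thesis unfolding z_def w_def
      by (intro csubspace_cscale[OF csubspace_closure[OF V]] csubspace_diff[OF csubspace_closure[OF V]])
  qed
  have "cmod (cinner z v) \<le> K * norm v" if "v \<in> V" for v
    using f_bound[OF that] repr[OF that] by simp
  then have "cmod (cinner z z) \<le> K * norm z" using zV by (rule cmod_cinner_le_on_closure)
  then have "norm z * norm z \<le> K * norm z" by (simp add: cinner_self power2_eq_square norm_mult)
  then have "norm z \<le> K" using K by (cases "norm z = 0") (auto simp: mult_le_cancel_right)
  then show ?thesis using zV repr by blast
qed

section \<open>Bounded operators and adjoints\<close>

lemma bounded_op_add: "bounded_op T \<Longrightarrow> T (x + y) = T x + T y"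
  by (simp add: bounded_op_def)

lemma bounded_op_cscale: "bounded_op T \<Longrightarrow> T (cscale c x) = cscale c (T x)"
  by (simp add: bounded_op_def)

lemma bounded_op_scaleR: "bounded_op T \<Longrightarrow> T (scaleR r x) = scaleR r (T x)"
  by (simp add: scaleR_cscale bounded_op_cscale)

lemma bounded_op_bound:
  assumes "bounded_op T" obtains K where "K \<ge> 0" "\<And>x. norm (T x) \<le> K * norm x"
proof -
  from assms obtain K where K: "\<And>x. norm (T x) \<le> K * norm x" unfolding bounded_op_def by blast
  have "norm (T x) \<le> max K 0 * norm x" for x
    using K[of x] by (meson max.cobounded1 mult_right_mono norm_ge_zero order_trans)
  then show ?thesis using that[of "max K 0"] by simp
qed

lemma bounded_op_linear: "bounded_op T \<Longrightarrow> bounded_linear T"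
proof -
  assume T: "bounded_op T"
  then obtain K where K: "\<And>x. norm (T x) \<le> K * norm x" using bounded_op_bound by blast
  show "bounded_linear T"
  proof
    fix x y :: 'a and r :: real
    show "T (x + y) = T x + T y" by (rule bounded_op_add[OF T])
    show "T (r *\<^sub>R x) = r *\<^sub>R T x" by (rule bounded_op_scaleR[OF T])
    show "\<exists>K. \<forall>x. norm (T x) \<le> norm x * K" by (rule exI[of _ K]) (simp add: K mult.commute)
  qed
qed

lemma bounded_op_zero: "bounded_op T \<Longrightarrow> T 0 = 0"
  by (rule linear_0[OF bounded_linear.linear[OF bounded_op_linear]])

lemma bounded_op_diff: "bounded_op T \<Longrightarrow> T (x - y) = T x - T y"
  by (rule linear_diff[OF bounded_linear.linear[OF bounded_op_linear]])

lemma bounded_opI: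
  assumes "\<And>x y. T (x + y) = T x + T y" "\<And>c x. T (cscale c x) = cscale c (T x)"
    "\<And>x. norm (T x) \<le> K * norm x"
  shows "bounded_op T"
  using assms unfolding bounded_op_def by blast

lemma bounded_op_id: "bounded_op (\<lambda>x. x)"
  by (rule bounded_opI[where K=1]) auto

lemma bounded_op_compose:
  assumes S: "bounded_op S" and T: "bounded_op T"
  shows "bounded_op (\<lambda>x. S (T x))"
proof -
  obtain K where K: "K \<ge> 0" "\<And>x. norm (S x) \<le> K * norm x" using bounded_op_bound[OF S] by blast
  obtain L where L: "\<And>x. norm (T x) \<le> L * norm x" using bounded_op_bound[OF T] by blast
  have "norm (S (T x)) \<le> K * L * norm x" for x
    using K(2)[of "T x"] mult_left_mono[OF L K(1), of x] by (simp add: mult.assoc)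
  then show ?thesis
    by (intro bounded_opI[where K="K * L"]) (simp_all add: bounded_op_add bounded_op_cscale S T)
qed

lemma bounded_op_plus:
  assumes S: "bounded_op S" and T: "bounded_op T"
  shows "bounded_op (\<lambda>x. S x + T x)"
proof -
  obtain K where K: "\<And>x. norm (S x) \<le> K * norm x" using bounded_op_bound[OF S] by blast
  obtain L where L: "\<And>x. norm (T x) \<le> L * norm x" using bounded_op_bound[OF T] by blast
  have "norm (S x + T x) \<le> (K + L) * norm x" for x
    using norm_triangle_ineq[of "S x" "T x"] K[of x] L[of x] by (simp add: algebra_simps)
  then show ?thesis
    by (intro bounded_opI[where K="K + L"]) (simp_all add: bounded_op_add bounded_op_cscale S T cscale_add_right)
qed

lemma bounded_op_cscale_op:
  assumes T: "bounded_op T"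
  shows "bounded_op (\<lambda>x. cscale a (T x))"
proof -
  obtain L where L: "\<And>x. norm (T x) \<le> L * norm x" using bounded_op_bound[OF T] by blast
  have "norm (cscale a (T x)) \<le> cmod a * L * norm x" for x
    using mult_left_mono[OF L norm_ge_zero, of a] by (simp add: norm_cscale mult.assoc)
  then show ?thesis
    by (intro bounded_opI[where K="cmod a * L"])
      (simp_all add: bounded_op_add bounded_op_cscale T cscale_add_right cscale_cscale mult.commute)
qed

lemma bounded_op_diff_op:
  assumes "bounded_op S" "bounded_op T"
  shows "bounded_op (\<lambda>x. S x - T x)"
  using bounded_op_plus[OF assms(1) bounded_op_cscale_op[OF assms(2), of "- 1"]]
  by (simp add: cscale_minus_one)

lemma adj_exists:
  assumes A: "bounded_op A"
  shows "\<exists>A'. bounded_op A' \<and> (\<forall>x y. cinner (A' x) y = cinner x (A y))"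
proof -
  obtain K where K: "K \<ge> 0" "\<And>x. norm (A x) \<le> K * norm x" using bounded_op_bound[OF A] by blast
  have "\<exists>z. (\<forall>y. cinner z y = cinner x (A y)) \<and> norm z \<le> K * norm x" for x
  proof -
    have "cmod (cinner x (A v)) \<le> norm x * K * norm v" for v
      using cmod_cinner_le[of x "A v"] mult_left_mono[OF K(2)[of v] norm_ge_zero[of x]]
      by (simp add: mult.assoc)
    then have "\<exists>z\<in>closure UNIV. (\<forall>v\<in>UNIV. cinner x (A v) = cinner z v) \<and> norm z \<le> norm x * K"
      using K(1)
      by (intro riesz_representation_dense[OF csubspace_UNIV])
        (simp_all add: bounded_op_add[OF A] bounded_op_cscale[OF A] cinner_add_right cinner_cscale_right)
    then show ?thesis by (auto simp: mult.commute)
  qed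
  then obtain A' where A'1: "\<And>x y. cinner (A' x) y = cinner x (A y)" and A'2: "\<And>x. norm (A' x) \<le> K * norm x"
    by metis
  have "bounded_op A'"
    by (rule bounded_opI[where K=K], (rule cinner_ext, simp add: A'1 cinner_add_left cinner_cscale_left)+)
      (rule A'2)
  then show ?thesis using A'1 by blast
qed

lemma
  assumes "bounded_op A"
  shows bounded_op_adj: "bounded_op (adj A)"
    and cinner_adj_left: "cinner (adj A x) y = cinner x (A y)"
  using someI_ex[OF adj_exists[OF assms]] unfolding adj_def by auto

lemma cinner_adj_right: "bounded_op A \<Longrightarrow> cinner x (adj A y) = cinner (A x) y"
  by (metis cinner_adj_left cinner_commute)

definition selfadjoint :: "('a::chilbert \<Rightarrow> 'a) \<Rightarrow> bool" where
  "selfadjoint T \<longleftrightarrow> (\<forall>x y. cinner (T x) y = cinner x (T y))"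

lemma selfadjointD: "selfadjoint T \<Longrightarrow> cinner (T x) y = cinner x (T y)"
  by (simp add: selfadjoint_def)

lemma selfadjoint_Im_cinner: "selfadjoint T \<Longrightarrow> Im (cinner x (T x)) = 0"
  by (metis Im_eq_0_if_cnj_eq cinner_commute selfadjointD)

lemma selfadjoint_adj_comp: "bounded_op A \<Longrightarrow> selfadjoint (\<lambda>x. adj A (A x))"
  by (simp add: selfadjoint_def cinner_adj_left cinner_adj_right)

lemma selfadjoint_if_Im_cinner_eq_0:
  assumes R: "bounded_op R" and Im: "\<And>x. Im (cinner x (R x)) = 0"
  shows "selfadjoint R"
  unfolding selfadjoint_def
proof (intro allI)
  fix x y
  define h where "h u v = cinner u (R v) - cinner (R u) v" for u v
  have hvv: "h v v = 0" for v
    using Im[of v] cinner_commute[of "R v" v] unfolding h_def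
    by (metis Reals_cnj_iff complex_is_Real_iff right_minus_eq)
  \<comment> \<open>polarization: the sesquilinear form \<open>h\<close> vanishes on the diagonal\<close>
  have "h (x + y) (x + y) = h x x + h x y + h y x + h y y"
    unfolding h_def by (simp add: cinner_add_left cinner_add_right bounded_op_add[OF R] algebra_simps)
  then have "h x y + h y x = 0" using hvv by simp
  moreover have "h (x + cscale \<i> y) (x + cscale \<i> y) = h x x + \<i> * h x y - \<i> * h y x + h y y"
    unfolding h_def
    by (simp add: cinner_add_left cinner_add_right bounded_op_add[OF R] bounded_op_cscale[OF R]
        cinner_cscale_left cinner_cscale_right algebra_simps)
  then have "h x y = h y x" using hvv by (simp add: algebra_simps)
  ultimately show "cinner (R x) y = cinner x (R y)" unfolding h_def by simp
qed

lemma positive_form_eq_0_imp_eq_0: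
  assumes R: "bounded_op R" and pos: "\<And>x. Im (cinner x (R x)) = 0 \<and> 0 \<le> Re (cinner x (R x))"
    and w: "cinner w (R w) = 0"
  shows "R w = 0"
proof -
  have sa: "selfadjoint R" using selfadjoint_if_Im_cinner_eq_0[OF R] pos by blast
  have "Re (cinner v (R w)) = 0" for v
  proof -
    \<comment> \<open>\<open>t \<mapsto> \<langle>w + t v, R (w + t v)\<rangle>\<close> is a nonnegative quadratic with vanishing constant term\<close>
    have "- Re (cinner v (R w)) = 0"
    proof (rule nonneg_quadratic_imp_linear_coeff_0[of "Re (cinner v (R v))"])
      fix t :: real
      have "Re (cinner w (R v)) = Re (cinner v (R w))"
        by (metis Re_cinner_commute sa selfadjointD)
      moreover have "0 \<le> Re (cinner (w + t *\<^sub>R v) (R (w + t *\<^sub>R v)))" using pos by blast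
      ultimately show "0 \<le> t\<^sup>2 * Re (cinner v (R v)) - 2 * t * - Re (cinner v (R w))"
        using w by (simp add: bounded_op_add[OF R] bounded_op_scaleR[OF R] cinner_add_left cinner_add_right
            cinner_scaleR_left cinner_scaleR_right power2_eq_square algebra_simps)
    qed (use pos in blast)
    then show ?thesis by simp
  qed
  then have "(norm (R w))\<^sup>2 = 0" by (simp add: Re_cinner_self[symmetric])
  then show ?thesis by simp
qed

lemma norm_adj_le:
  assumes P: "bounded_op P" and Pn: "\<And>x. norm (P x) \<le> norm x"
  shows "norm (adj P y) \<le> norm y"
proof -
  have "(norm (adj P y))\<^sup>2 = Re (cinner y (P (adj P y)))"
    by (simp add: Re_cinner_self[symmetric] cinner_adj_left[OF P])
  also have "\<dots> \<le> norm y * norm (P (adj P y))"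
    using complex_Re_le_cmod order_trans cmod_cinner_le by blast
  also have "\<dots> \<le> norm y * norm (adj P y)" by (intro mult_left_mono Pn) simp
  finally show ?thesis
    by (cases "norm (adj P y) = 0") (auto simp: power2_eq_square mult_le_cancel_right)
qed

section \<open>Operators on a subspace and their numerical radius\<close>

lemma bounded_op_on_in: "bounded_op_on M X \<Longrightarrow> x \<in> M \<Longrightarrow> X x \<in> M"
  by (simp add: bounded_op_on_def)

lemma bounded_op_on_add: "bounded_op_on M X \<Longrightarrow> x \<in> M \<Longrightarrow> y \<in> M \<Longrightarrow> X (x + y) = X x + X y"
  by (simp add: bounded_op_on_def)

lemma bounded_op_on_cscale: "bounded_op_on M X \<Longrightarrow> x \<in> M \<Longrightarrow> X (cscale c x) = cscale c (X x)"
  by (simp add: bounded_op_on_def)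

lemma bounded_op_on_bound:
  assumes "bounded_op_on M X"
  obtains K where "K \<ge> 0" "\<And>x. x \<in> M \<Longrightarrow> norm (X x) \<le> K * norm x"
proof -
  from assms obtain K where K: "\<And>x. x \<in> M \<Longrightarrow> norm (X x) \<le> K * norm x"
    unfolding bounded_op_on_def by blast
  have "norm (X x) \<le> max K 0 * norm x" if "x \<in> M" for x
    using K[OF that] by (meson max.cobounded1 mult_right_mono norm_ge_zero order_trans)
  then show ?thesis using that[of "max K 0"] by simp
qed

lemma bounded_op_on_diff:
  assumes "bounded_op_on M X" "csubspace M" "x \<in> M" "y \<in> M"
  shows "X (x - y) = X x - X y"
  using additive_on_diff[OF assms(2) bounded_op_on_add[OF assms(1)] assms(3,4)] .

lemma bounded_op_on_continuous_on:
  assumes X: "bounded_op_on M X" and M: "csubspace M"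
  shows "continuous_on M X"
proof -
  obtain K where K: "K \<ge> 0" "\<And>x. x \<in> M \<Longrightarrow> norm (X x) \<le> K * norm x"
    using bounded_op_on_bound[OF X] by blast
  have "dist (X x) (X y) \<le> K * dist x y" if "x \<in> M" "y \<in> M" for x y
    using bounded_op_on_diff[OF X M that] K(2)[OF csubspace_diff[OF M that]] by (simp add: dist_norm)
  then have "K-lipschitz_on M X" using K(1) by (intro lipschitz_onI)
  then show ?thesis by (rule lipschitz_on_continuous_on)
qed

lemma cmod_cinner_le_numerical_radius:
  assumes X: "bounded_op_on M X" and M: "csubspace M" and u: "u \<in> M"
  shows "cmod (cinner u (X u)) \<le> numerical_radius M X * (norm u)\<^sup>2"
proof (cases "u = 0")
  case False
  obtain K where K: "K \<ge> 0" "\<And>x. x \<in> M \<Longrightarrow> norm (X x) \<le> K * norm x"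
    using bounded_op_on_bound[OF X] by blast
  define n where "n = norm u"
  have n: "n > 0" using False unfolding n_def by simp
  define u' where "u' = cscale (complex_of_real (1/n)) u"
  have u'M: "u' \<in> M" unfolding u'_def by (rule csubspace_cscale[OF M u])
  have nu': "norm u' = 1" unfolding u'_def norm_cscale norm_of_real using n by (simp add: n_def)
  have eq: "cinner u' (X u') = complex_of_real (1 / n\<^sup>2) * cinner u (X u)"
    unfolding u'_def using bounded_op_on_cscale[OF X u]
    by (simp add: cinner_cscale_left cinner_cscale_right power2_eq_square)
  have "bdd_above (insert 0 {cmod (cinner x (X x)) | x. x \<in> M \<and> norm x = 1})"
  proof (rule bdd_aboveI[where M=K])
    fix y assume "y \<in> insert 0 {cmod (cinner x (X x)) | x. x \<in> M \<and> norm x = 1}"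
    then consider "y = 0" | x where "y = cmod (cinner x (X x))" "x \<in> M" "norm x = 1" by blast
    then show "y \<le> K"
    proof cases
      case 2
      then show ?thesis using cmod_cinner_le[of x "X x"] K(2)[of x] by simp
    qed (use K in simp)
  qed
  then have "cmod (cinner u' (X u')) \<le> numerical_radius M X"
    unfolding numerical_radius_def using u'M nu' by (intro cSup_upper) blast+
  then have "cmod (cinner u (X u)) / n\<^sup>2 \<le> numerical_radius M X"
    by (simp add: eq norm_mult norm_divide norm_power)
  then show ?thesis using n by (simp add: n_def field_simps)
qed simp

lemma numerical_radius_le:
  assumes K: "0 \<le> K" and XK: "\<And>x. x \<in> M \<Longrightarrow> norm (X x) \<le> K * norm x"
  shows "numerical_radius M X \<le> K"
  unfolding numerical_radius_def
proof (rule cSup_least)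
  fix y assume "y \<in> insert 0 {cmod (cinner x (X x)) |x. x \<in> M \<and> norm x = 1}"
  then consider "y = 0" | x where "y = cmod (cinner x (X x))" "x \<in> M" "norm x = 1" by blast
  then show "y \<le> K"
  proof cases
    case 2
    then show ?thesis using cmod_cinner_le[of x "X x"] XK[of x] by simp
  qed (use K in simp)
qed simp

section \<open>The third operator of a \<open>\<P>\<close>-contraction is a contraction\<close>

lemma mat2_norm_bdd:
  "bdd_above {sqrt ((cmod (a11 * u + a12 * v))\<^sup>2 + (cmod (a21 * u + a22 * v))\<^sup>2) | u v.
      (cmod u)\<^sup>2 + (cmod v)\<^sup>2 = 1}"
proof (rule bdd_aboveI[where M="cmod a11 + cmod a12 + cmod a21 + cmod a22"])
  fix y assume "y \<in> {sqrt ((cmod (a11 * u + a12 * v))\<^sup>2 + (cmod (a21 * u + a22 * v))\<^sup>2) | u v.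
      (cmod u)\<^sup>2 + (cmod v)\<^sup>2 = 1}"
  then obtain u v where y: "y = sqrt ((cmod (a11 * u + a12 * v))\<^sup>2 + (cmod (a21 * u + a22 * v))\<^sup>2)"
    and uv: "(cmod u)\<^sup>2 + (cmod v)\<^sup>2 = 1" by blast
  have "cmod u \<le> 1" "cmod v \<le> 1"
    using uv by (metis abs_norm_cancel abs_square_le_1 le_add_same_cancel1 le_add_same_cancel2 zero_le_power2)+
  then have "cmod (a * u + b * v) \<le> cmod a + cmod b" for a b
    using norm_triangle_ineq[of "a * u" "b * v"]
      mult_left_mono[OF \<open>cmod u \<le> 1\<close>, of "cmod a"] mult_left_mono[OF \<open>cmod v \<le> 1\<close>, of "cmod b"]
    by (simp add: norm_mult)
  moreover have "y \<le> cmod (a11 * u + a12 * v) + cmod (a21 * u + a22 * v)"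
    using sqrt_sum_squares_le_sum_abs[of "cmod (a11 * u + a12 * v)" "cmod (a21 * u + a22 * v)"]
    by (simp add: y)
  ultimately show "y \<le> cmod a11 + cmod a12 + cmod a21 + cmod a22"
    by (smt (verit))
qed

lemma det_le_1_if_mat2_norm_less_1:
  assumes "mat2_norm a11 a12 a21 a22 < 1"
  shows "cmod (a11 * a22 - a12 * a21) \<le> 1"
proof -
  define N where "N = mat2_norm a11 a12 a21 a22"
  \<comment> \<open>the norms of the two columns, attained at the unit vectors, are at most \<open>N\<close>\<close>
  have col1: "sqrt ((cmod a11)\<^sup>2 + (cmod a21)\<^sup>2) \<le> N"
    unfolding N_def mat2_norm_def
    by (rule cSup_upper[OF _ mat2_norm_bdd]) (rule CollectI, rule exI[of _ 1], rule exI[of _ 0], simp)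
  have col2: "sqrt ((cmod a22)\<^sup>2 + (cmod a12)\<^sup>2) \<le> N"
    unfolding N_def mat2_norm_def
    by (rule cSup_upper[OF _ mat2_norm_bdd])
      (rule CollectI, rule exI[of _ 0], rule exI[of _ 1], simp add: add.commute)
  have N: "0 \<le> N" using col1 by (meson order_trans real_sqrt_ge_zero add_nonneg_nonneg zero_le_power2)
  have "cmod (a11 * a22 - a12 * a21) \<le> cmod a11 * cmod a22 + cmod a21 * cmod a12"
    by (metis norm_mult norm_triangle_ineq4 mult.commute)
  also have "\<dots> \<le> cmod (Complex (cmod a11) (cmod a21)) * cmod (Complex (cmod a22) (cmod a12))"
    using complex_Re_le_cmod[of "cnj (Complex (cmod a11) (cmod a21)) * Complex (cmod a22) (cmod a12)"]
    by (simp add: norm_mult)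
  also have "\<dots> \<le> N * N"
    using col1 col2 N by (intro mult_mono) (simp_all add: cmod_def)
  also have "\<dots> \<le> 1"
    using assms N by (simp add: N_def mult_le_one)
  finally show ?thesis .
qed

lemma pentablock_closure_det_le_1: "z \<in> closure pentablock \<Longrightarrow> cmod (snd (snd z)) \<le> 1"
proof -
  assume z: "z \<in> closure pentablock"
  have "closure pentablock \<subseteq> {z. cmod (snd (snd z)) \<le> 1}"
  proof (rule closure_minimal)
    show "pentablock \<subseteq> {z. cmod (snd (snd z)) \<le> 1}"
      unfolding pentablock_def using det_le_1_if_mat2_norm_less_1 by auto
    show "closed {z :: complex \<times> complex \<times> complex. cmod (snd (snd z)) \<le> 1}"
      by (intro closed_Collect_le continuous_intros)
  qed
  then show ?thesis using z by blast
qed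

lemma zero_in_pentablock: "(0, 0, 0) \<in> pentablock"
proof -
  have "(cmod (1::complex))\<^sup>2 + (cmod (0::complex))\<^sup>2 = 1" by simp
  then have "{sqrt ((cmod (0 * u + 0 * v))\<^sup>2 + (cmod (0 * u + 0 * v))\<^sup>2) | u v :: complex.
      (cmod u)\<^sup>2 + (cmod v)\<^sup>2 = 1} = {0}"
    by fastforce
  then have "mat2_norm 0 0 0 0 = 0" unfolding mat2_norm_def by simp
  then show ?thesis unfolding pentablock_def by (auto intro!: exI[of _ 0])
qed

lemma onorm_le_if_spectral_set:
  assumes K: "spectral_set K a b c" "K \<noteq> {}" and r: "\<And>z. z \<in> K \<Longrightarrow> cmod (snd (snd z)) \<le> r"
  shows "onorm c \<le> r"
proof -
  \<comment> \<open>apply the spectral-set inequality to \<open>f(z\<^sub>1, z\<^sub>2, z\<^sub>3) = z\<^sub>3\<close>, i.e. \<open>p = z\<^sub>3\<close> and \<open>q = 1\<close>\<close>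
  define p where "p = (\<lambda>m::nat \<times> nat \<times> nat. if m = (0, 0, 1) then (1::complex) else 0)"
  define q where "q = (\<lambda>m::nat \<times> nat \<times> nat. if m = (0, 0, 0) then (1::complex) else 0)"
  have sp: "{m. p m \<noteq> 0} = {(0, 0, 1)}" and sq: "{m. q m \<noteq> 0} = {(0, 0, 0)}"
    unfolding p_def q_def by auto
  have ep: "poly3_eval p z = snd (snd z)" and eq: "poly3_eval q z = 1" for z
    unfolding poly3_eval_def sp sq by (cases z; simp add: p_def q_def)+
  have "rat3_op p q a b c = c"
    unfolding rat3_op_def poly3_op_def sp sq by (simp add: p_def q_def cscale_one comp_def)
  moreover have "onorm (rat3_op p q a b c) \<le> Sup {cmod (poly3_eval p z / poly3_eval q z) | z. z \<in> K}"
    using K(1)[unfolded spectral_set_def, THEN conjunct2, rule_format, of p q] by (simp add: sp sq eq)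
  moreover have "Sup {cmod (poly3_eval p z / poly3_eval q z) | z. z \<in> K} \<le> r"
    using K(2) r by (intro cSup_least) (auto simp: ep eq)
  ultimately show ?thesis by simp
qed

lemma P_contraction_bounded_op:
  assumes "P_contraction A S P"
  shows "bounded_op A" "bounded_op S" "bounded_op P"
  using assms unfolding P_contraction_def by auto

lemma P_contraction_norm_le:
  assumes PC: "P_contraction A S P"
  shows "norm (P x) \<le> norm x"
proof -
  have "onorm P \<le> 1"
    using PC zero_in_pentablock closure_subset pentablock_closure_det_le_1
    unfolding P_contraction_def by (intro onorm_le_if_spectral_set[of _ A S]) auto
  then show ?thesis
    using onorm[OF bounded_op_linear[OF P_contraction_bounded_op(3)[OF PC]], of x]
      mult_right_mono[of "onorm P" 1 "norm x"] by simp
qed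

section \<open>The square root of \<open>I - C\<close> for a selfadjoint contraction \<open>C\<close>\<close>

text \<open>The coefficients of the binomial series \<open>\<surd>(1 - t) = (\<Sum>n. sqrt1m_coeff n * t ^ n)\<close>.\<close>

definition sqrt1m_coeff :: "nat \<Rightarrow> real" where
  "sqrt1m_coeff n = ((1/2) gchoose n) * (- 1) ^ n"

lemma sqrt1m_coeff_0 [simp]: "sqrt1m_coeff 0 = 1"
  by (simp add: sqrt1m_coeff_def)

lemma sqrt1m_coeff_nonpos: "n \<ge> 1 \<Longrightarrow> sqrt1m_coeff n \<le> 0"
proof -
  assume "n \<ge> 1"
  then obtain m where m: "n = Suc m" by (cases n) auto
  have "sqrt1m_coeff n = pochhammer (- 1/2) n / fact n"
    by (simp add: sqrt1m_coeff_def gbinomial_pochhammer power_mult_distrib[symmetric])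
  also have "pochhammer (- 1/2 :: real) n = (- 1/2) * pochhammer (1/2) m"
    by (simp add: m pochhammer_rec)
  finally show ?thesis
    using pochhammer_nonneg[of "1/2 :: real" m] by (simp add: divide_nonpos_pos)
qed

lemma sum_sqrt1m_coeff_nonneg: "0 \<le> (\<Sum>k\<le>m. sqrt1m_coeff k)"
proof -
  have "(\<Sum>k\<le>m. sqrt1m_coeff k) = (- 1) ^ m * ((1/2 - 1) gchoose m)"
    unfolding sqrt1m_coeff_def by (rule gbinomial_sum_lower_neg)
  also have "\<dots> = pochhammer (1/2 :: real) m / fact m"
    by (simp add: gbinomial_pochhammer power_mult_distrib[symmetric])
  also have "\<dots> \<ge> 0" by (intro divide_nonneg_pos pochhammer_nonneg) auto
  finally show ?thesis .
qed

lemma summable_abs_sqrt1m_coeff: "summable (\<lambda>k. \<bar>sqrt1m_coeff k\<bar>)"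
proof (rule bounded_imp_summable[where B=2])
  fix n
  have "\<bar>sqrt1m_coeff k\<bar> = (if k = 0 then 2 else 0) - sqrt1m_coeff k" for k
    using sqrt1m_coeff_nonpos[of k] by (cases "k = 0") auto
  then have "(\<Sum>k\<le>n. \<bar>sqrt1m_coeff k\<bar>) = 2 - (\<Sum>k\<le>n. sqrt1m_coeff k)"
    by (simp add: sum_subtractf sum.delta)
  then show "(\<Sum>k\<le>n. \<bar>sqrt1m_coeff k\<bar>) \<le> 2" using sum_sqrt1m_coeff_nonneg[of n] by simp
qed simp

text \<open>The Cauchy square of the series is \<open>1 - t\<close>, by Vandermonde's identity for \<open>(1/2 + 1/2) gchoose k\<close>.\<close>

lemma sqrt1m_coeff_convolution:
  "(\<Sum>i\<le>k. sqrt1m_coeff i * sqrt1m_coeff (k - i)) = (if k = 0 then 1 else if k = 1 then - 1 else 0)"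
proof -
  have "(\<Sum>i\<le>k. sqrt1m_coeff i * sqrt1m_coeff (k - i))
      = (- 1) ^ k * (\<Sum>i\<in>{0..k}. ((1/2) gchoose i) * ((1/2) gchoose (k - i)))"
    unfolding sqrt1m_coeff_def sum_distrib_left atMost_atLeast0
  proof (rule sum.cong[OF refl])
    fix i assume "i \<in> {0..k}"
    then have "(- 1 :: real) ^ k = (- 1) ^ i * (- 1) ^ (k - i)" by (simp add: power_add[symmetric])
    then show "((1 / 2 :: real) gchoose i) * (- 1) ^ i * (((1 / 2 :: real) gchoose (k - i)) * (- 1) ^ (k - i)) =
         (- 1) ^ k * (((1 / 2 :: real) gchoose i) * ((1 / 2 :: real) gchoose (k - i)))" by simp
  qed
  also have "(\<Sum>i\<in>{0..k}. ((1/2 :: real) gchoose i) * ((1/2) gchoose (k - i))) = (1/2 + 1/2) gchoose k"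
    by (rule gbinomial_Vandermonde)
  also have "((1/2 + 1/2 :: real) gchoose k) = of_nat (1 choose k)"
    using binomial_gbinomial[of 1 k, where 'a=real] by simp
  finally show ?thesis
    by (cases k) (auto simp: binomial_eq_0)
qed

lemma sum_norm_square_minus_triangle_tendsto_0:
  fixes a :: "nat \<Rightarrow> 'a::real_normed_vector" and b :: "nat \<Rightarrow> 'b::real_normed_vector"
  assumes a: "summable (\<lambda>k. norm (a k))" and b: "summable (\<lambda>k. norm (b k))"
  shows "(\<lambda>n. \<Sum>(i, j)\<in>{..<n} \<times> {..<n} - {(i, j). i + j < n}. norm (a i) * norm (b j)) \<longlonglongrightarrow> 0"
proof -
  let ?S1 = "\<lambda>n::nat. {..<n} \<times> {..<n}"
  let ?S2 = "\<lambda>n::nat. {(i,j). i + j < n}"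
  let ?f = "\<lambda>(i,j). norm (a i) * norm (b j)"
  have f_nonneg: "\<And>x. 0 \<le> ?f x" by auto
  have "(\<lambda>n. (\<Sum>k<n. norm (a k)) * (\<Sum>k<n. norm (b k))) \<longlonglongrightarrow> (\<Sum>k. norm (a k)) * (\<Sum>k. norm (b k))"
    using a b by (intro tendsto_mult summable_LIMSEQ)
  then have "(\<lambda>n. sum ?f (?S1 n)) \<longlonglongrightarrow> (\<Sum>k. norm (a k)) * (\<Sum>k. norm (b k))"
    by (simp only: sum_product sum.Sigma [rule_format] finite_lessThan)
  then have Cauchy: "Cauchy (\<lambda>n. sum ?f (?S1 n))"
    by (rule convergent_Cauchy[OF convergentI])
  show ?thesis
  proof (rule LIMSEQ_I)
    fix r :: real assume r: "0 < r"
    from CauchyD [OF Cauchy r] obtain N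
      where N: "\<forall>m\<ge>N. \<forall>n\<ge>N. norm (sum ?f (?S1 m) - sum ?f (?S1 n)) < r" ..
    \<comment> \<open>the square of side \<open>n div 2\<close> lies inside the triangle \<open>?S2 n\<close>\<close>
    have "sum ?f (?S1 n - ?S2 n) < r" if "2 * N \<le> n" for n
    proof -
      have "sum ?f (?S1 n - ?S2 n) \<le> sum ?f (?S1 n - ?S1 (n div 2))"
        by (intro sum_mono2 finite_Diff f_nonneg Diff_mono subset_refl) auto
      also have "\<dots> = sum ?f (?S1 n) - sum ?f (?S1 (n div 2))"
        by (intro sum_diff) auto
      also have "\<dots> < r"
      proof -
        have "N \<le> n div 2" "N \<le> n" using that by simp_all
        then show ?thesis using N[rule_format, of n "n div 2"] by (simp add: abs_less_iff)
      qed
      finally show ?thesis .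
    qed
    moreover have "0 \<le> sum ?f A" for A by (intro sum_nonneg f_nonneg)
    ultimately show "\<exists>N. \<forall>n\<ge>N. norm (sum ?f (?S1 n - ?S2 n) - 0) < r" by auto
  qed
qed

text \<open>Mertens' theorem for an arbitrary bounded bilinear product (the library version
  \<open>Cauchy_product_sums\<close> is stated for normed algebras only).\<close>

lemma bounded_bilinear_Cauchy_product_sums:
  fixes a :: "nat \<Rightarrow> 'a::real_normed_vector" and b :: "nat \<Rightarrow> 'b::real_normed_vector"
    and prod :: "'a \<Rightarrow> 'b \<Rightarrow> 'c::banach"
  assumes bb: "bounded_bilinear prod"
    and a: "summable (\<lambda>k. norm (a k))" and b: "summable (\<lambda>k. norm (b k))"
    and ca: "summable a" and cb: "summable b"
  shows "(\<lambda>k. \<Sum>i\<le>k. prod (a i) (b (k - i))) sums prod (\<Sum>k. a k) (\<Sum>k. b k)"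
proof -
  interpret bounded_bilinear prod by (rule bb)
  obtain K where K: "\<And>x y. norm (prod x y) \<le> norm x * norm y * K" using bounded by blast
  let ?S1 = "\<lambda>n::nat. {..<n} \<times> {..<n}"
  let ?S2 = "\<lambda>n::nat. {(i,j). i + j < n}"
  let ?g = "\<lambda>(i,j). prod (a i) (b j)"
  let ?f = "\<lambda>(i,j). norm (a i) * norm (b j)"
  have norm_sum_f: "norm (sum ?f A) = sum ?f A" for A
    unfolding real_norm_def by (intro abs_of_nonneg sum_nonneg) auto
  \<comment> \<open>the partial products are the sums over the squares \<open>?S1 n\<close>, the partial Cauchy sums
    those over the triangles \<open>?S2 n\<close>\<close>
  have "prod (\<Sum>k<n. a k) (\<Sum>k<n. b k) = sum ?g (?S1 n)" for n
    by (subst sum_left, subst sum_right) (rule sum.cartesian_product)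
  moreover have "(\<lambda>n. prod (\<Sum>k<n. a k) (\<Sum>k<n. b k)) \<longlonglongrightarrow> prod (\<Sum>k. a k) (\<Sum>k. b k)"
    by (intro tendsto summable_LIMSEQ ca cb)
  ultimately have squares: "(\<lambda>n. sum ?g (?S1 n)) \<longlonglongrightarrow> prod (\<Sum>k. a k) (\<Sum>k. b k)" by simp
  have bound: "norm (sum ?g (?S1 n - ?S2 n)) \<le> norm (sum ?f (?S1 n - ?S2 n)) * K" for n
  proof -
    have "norm (sum ?g (?S1 n - ?S2 n)) \<le> (\<Sum>x\<in>?S1 n - ?S2 n. norm (?g x))" by (rule norm_sum)
    also have "\<dots> \<le> (\<Sum>x\<in>?S1 n - ?S2 n. ?f x * K)" by (intro sum_mono) (auto simp: K)
    also have "\<dots> = norm (sum ?f (?S1 n - ?S2 n)) * K"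
      by (simp only: norm_sum_f sum_distrib_right)
    finally show ?thesis .
  qed
  have "Zfun (\<lambda>n. sum ?f (?S1 n - ?S2 n)) sequentially"
    using sum_norm_square_minus_triangle_tendsto_0[OF a b] by (simp only: tendsto_Zfun_iff diff_0_right)
  then have "Zfun (\<lambda>n. sum ?g (?S1 n - ?S2 n)) sequentially"
    by (rule Zfun_imp_Zfun[where K=K]) (rule always_eventually, rule allI, rule bound)
  moreover have "sum ?g (?S1 n - ?S2 n) = sum ?g (?S1 n) - sum ?g (?S2 n)" for n
    by (intro sum_diff) auto
  ultimately have "(\<lambda>n. sum ?g (?S1 n) - sum ?g (?S2 n)) \<longlonglongrightarrow> 0"
    by (simp add: tendsto_Zfun_iff)
  with squares have "(\<lambda>n. sum ?g (?S2 n)) \<longlonglongrightarrow> prod (\<Sum>k. a k) (\<Sum>k. b k)"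
    by (rule Lim_transform2)
  then show ?thesis
    by (simp only: sums_def sum.triangle_reindex)
qed

locale selfadjoint_contraction =
  fixes C :: "'a::chilbert \<Rightarrow> 'a"
  assumes bounded: "bounded_op C"
    and selfadjoint: "selfadjoint C"
    and norm_le: "\<And>x. norm (C x) \<le> norm x"
begin

lemma bounded_op_power: "bounded_op (C ^^ n)"
  by (induction n) (simp_all add: bounded_op_id bounded_op_compose bounded)

lemma norm_power_le: "norm ((C ^^ n) x) \<le> norm x"
  by (induction n) (auto intro: order_trans[OF norm_le])

lemma selfadjoint_power: "cinner ((C ^^ n) x) y = cinner x ((C ^^ n) y)"
  by (induction n arbitrary: x y) (simp_all add: selfadjointD[OF selfadjoint] funpow_swap1)

lemma power_diff_power: "i \<le> k \<Longrightarrow> (C ^^ i) ((C ^^ (k - i)) x) = (C ^^ k) x"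
  by (metis funpow_add le_add_diff_inverse o_apply)

lemma power_commute:
  assumes "\<And>x. R (C x) = C (R x)"
  shows "R ((C ^^ n) x) = (C ^^ n) (R x)"
  by (induction n) (simp_all add: assms)

definition power_blinfun :: "nat \<Rightarrow> 'a \<Rightarrow>\<^sub>L 'a" where
  "power_blinfun n = Blinfun (C ^^ n)"

lemma power_blinfun_apply: "blinfun_apply (power_blinfun n) = C ^^ n"
  unfolding power_blinfun_def
  by (rule bounded_linear_Blinfun_apply[OF bounded_op_linear[OF bounded_op_power]])

lemma summable_norm_sqrt_series: "summable (\<lambda>n. norm (sqrt1m_coeff n *\<^sub>R power_blinfun n))"
proof (rule summable_comparison_test[OF _ summable_abs_sqrt1m_coeff])
  have "norm (power_blinfun n) \<le> 1" for n
    by (rule norm_blinfun_bound) (simp_all add: power_blinfun_apply norm_power_le)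
  then show "\<exists>N. \<forall>n\<ge>N. norm (norm (sqrt1m_coeff n *\<^sub>R power_blinfun n)) \<le> \<bar>sqrt1m_coeff n\<bar>"
    by (simp add: mult_left_le)
qed

definition sqrt_blinfun :: "'a \<Rightarrow>\<^sub>L 'a" where
  "sqrt_blinfun = (\<Sum>n. sqrt1m_coeff n *\<^sub>R power_blinfun n)"

definition sqrt_op :: "'a \<Rightarrow> 'a" where
  "sqrt_op = blinfun_apply sqrt_blinfun"

lemma sums_sqrt_op: "(\<lambda>n. sqrt1m_coeff n *\<^sub>R (C ^^ n) x) sums sqrt_op x"
proof -
  have "(\<lambda>n. sqrt1m_coeff n *\<^sub>R power_blinfun n) sums sqrt_blinfun"
    unfolding sqrt_blinfun_def by (rule summable_sums[OF summable_norm_cancel[OF summable_norm_sqrt_series]])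
  from bounded_linear.sums[OF blinfun.bounded_linear_left this, of x]
  show ?thesis unfolding sqrt_op_def by (simp add: power_blinfun_apply blinfun.scaleR_left)
qed

lemma sqrt_blinfun_squared: "sqrt_blinfun o\<^sub>L sqrt_blinfun = power_blinfun 0 - power_blinfun 1"
proof -
  let ?a = "\<lambda>n. sqrt1m_coeff n *\<^sub>R power_blinfun n"
  have "summable ?a" by (rule summable_norm_cancel[OF summable_norm_sqrt_series])
  then have Cauchy: "(\<lambda>k. \<Sum>i\<le>k. ?a i o\<^sub>L ?a (k - i)) sums (sqrt_blinfun o\<^sub>L sqrt_blinfun)"
    unfolding sqrt_blinfun_def
    by (intro bounded_bilinear_Cauchy_product_sums[OF bounded_bilinear_blinfun_compose]
        summable_norm_sqrt_series)
  have "?a i o\<^sub>L ?a (k - i) = (sqrt1m_coeff i * sqrt1m_coeff (k - i)) *\<^sub>R power_blinfun k"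
    if "i \<le> k" for i k
    using that by (intro blinfun_eqI)
      (simp add: blinfun.scaleR_right blinfun.scaleR_left power_blinfun_apply power_diff_power mult.commute)
  then have "(\<Sum>i\<le>k. ?a i o\<^sub>L ?a (k - i)) = (\<Sum>i\<le>k. sqrt1m_coeff i * sqrt1m_coeff (k - i)) *\<^sub>R power_blinfun k"
    for k by (simp add: scaleR_sum_left)
  also have "\<dots> k = (if k = 0 then power_blinfun 0 else 0) + (if k = 1 then - power_blinfun 1 else 0)" for k
    by (simp add: sqrt1m_coeff_convolution)
  finally have "(\<lambda>k. (if k = 0 then power_blinfun 0 else 0) + (if k = 1 then - power_blinfun 1 else 0))
      sums (sqrt_blinfun o\<^sub>L sqrt_blinfun)"
    using Cauchy by simp
  moreover have "(\<lambda>k. (if k = 0 then power_blinfun 0 else 0) + (if k = 1 then - power_blinfun 1 else 0))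
      sums (power_blinfun 0 + - power_blinfun 1)"
    by (intro sums_add sums_single)
  ultimately show ?thesis by (simp add: sums_unique2)
qed

lemma sqrt_op_sqrt_op: "sqrt_op (sqrt_op x) = x - C x"
  using arg_cong[OF sqrt_blinfun_squared, of "\<lambda>F. blinfun_apply F x"]
  by (simp add: sqrt_op_def blinfun.diff_left power_blinfun_apply)

lemma bounded_op_sqrt_op: "bounded_op sqrt_op"
proof (rule bounded_opI[where K="norm sqrt_blinfun"])
  fix c x
  have "(\<lambda>n. cscale c (sqrt1m_coeff n *\<^sub>R (C ^^ n) x)) sums sqrt_op (cscale c x)"
    using sums_sqrt_op[of "cscale c x"]
    by (simp add: bounded_op_cscale[OF bounded_op_power] scaleR_cscale cscale_cscale mult.commute)
  moreover have "(\<lambda>n. cscale c (sqrt1m_coeff n *\<^sub>R (C ^^ n) x)) sums cscale c (sqrt_op x)"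
    by (rule bounded_linear.sums[OF bounded_linear_cscale sums_sqrt_op])
  ultimately show "sqrt_op (cscale c x) = cscale c (sqrt_op x)" by (rule sums_unique2)
qed (simp_all add: sqrt_op_def blinfun.add_right norm_blinfun)

lemma Re_cinner_power_le: "Re (cinner x ((C ^^ n) x)) \<le> (norm x)\<^sup>2"
  using complex_Re_le_cmod[of "cinner x ((C ^^ n) x)"] cmod_cinner_le[of x "(C ^^ n) x"]
    mult_left_mono[OF norm_power_le[of n x] norm_ge_zero[of x]]
  by (simp add: power2_eq_square)

lemma sqrt_op_positive: "Im (cinner x (sqrt_op x)) = 0 \<and> 0 \<le> Re (cinner x (sqrt_op x))"
proof -
  define r where "r n = cinner x ((C ^^ n) x)" for n
  have r_sums: "(\<lambda>n. complex_of_real (sqrt1m_coeff n) * r n) sums cinner x (sqrt_op x)"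
    using bounded_linear.sums[OF bounded_bilinear.bounded_linear_right[OF bounded_bilinear_cinner]
        sums_sqrt_op, of x]
    by (simp add: r_def cinner_scaleR_right)
  have "Im (r n) = 0" for n
    unfolding r_def by (metis Im_eq_0_if_cnj_eq cinner_commute selfadjoint_power)
  then have "(\<lambda>n. 0) sums Im (cinner x (sqrt_op x))"
    using sums_Im[OF r_sums] by simp
  then have Im: "Im (cinner x (sqrt_op x)) = 0" using sums_zero sums_unique2 by blast
  \<comment> \<open>all coefficients but the first are \<open>\<le> 0\<close>, so every partial sum is at least
    \<open>(\<Sum>n<N. sqrt1m_coeff n) \<parallel>x\<parallel>\<^sup>2 \<ge> 0\<close>\<close>
  have term_ge: "sqrt1m_coeff n * (norm x)\<^sup>2 \<le> sqrt1m_coeff n * Re (r n)" for n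
  proof (cases "n = 0")
    case True then show ?thesis by (simp add: r_def Re_cinner_self)
  next
    case False
    then show ?thesis using sqrt1m_coeff_nonpos[of n] Re_cinner_power_le[of x n]
      by (simp add: r_def mult_left_mono_neg)
  qed
  have "0 \<le> (\<Sum>n<N. sqrt1m_coeff n * Re (r n))" for N
  proof (cases N)
    case (Suc M)
    have "0 \<le> (\<Sum>n\<le>M. sqrt1m_coeff n) * (norm x)\<^sup>2" using sum_sqrt1m_coeff_nonneg[of M] by simp
    also have "\<dots> = (\<Sum>n<N. sqrt1m_coeff n * (norm x)\<^sup>2)"
      using Suc by (simp add: sum_distrib_right lessThan_Suc_atMost)
    also have "\<dots> \<le> (\<Sum>n<N. sqrt1m_coeff n * Re (r n))" by (intro sum_mono term_ge)
    finally show ?thesis .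
  qed simp
  moreover have "(\<lambda>n. sqrt1m_coeff n * Re (r n)) sums Re (cinner x (sqrt_op x))"
    using sums_Re[OF r_sums] by simp
  ultimately have "0 \<le> Re (cinner x (sqrt_op x))"
    unfolding sums_def by (intro LIMSEQ_le_const) auto
  then show ?thesis using Im by simp
qed

lemma selfadjoint_sqrt_op: "selfadjoint sqrt_op"
  using selfadjoint_if_Im_cinner_eq_0[OF bounded_op_sqrt_op] sqrt_op_positive by blast

lemma sqrt_op_commute:
  assumes R: "bounded_op R" and RC: "\<And>x. R (C x) = C (R x)"
  shows "R (sqrt_op x) = sqrt_op (R x)"
proof -
  have "(\<lambda>n. R (sqrt1m_coeff n *\<^sub>R (C ^^ n) x)) sums R (sqrt_op x)"
    by (rule bounded_linear.sums[OF bounded_op_linear[OF R] sums_sqrt_op])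
  moreover have "(\<lambda>n. R (sqrt1m_coeff n *\<^sub>R (C ^^ n) x)) = (\<lambda>n. sqrt1m_coeff n *\<^sub>R (C ^^ n) (R x))"
    by (simp add: bounded_op_scaleR[OF R] power_commute[of R, OF RC])
  ultimately show ?thesis using sums_sqrt_op[of "R x"] by (simp add: sums_unique2)
qed

text \<open>A positive square root \<open>R\<close> of \<open>I - C\<close> commutes with \<open>C\<close>, hence with \<open>sqrt_op\<close>;
  then \<open>w = R v - sqrt_op v\<close> satisfies \<open>R w + sqrt_op w = 0\<close>, which forces \<open>w = 0\<close>.\<close>

lemma positive_sqrt_unique:
  assumes R: "bounded_op R" and R_pos: "positive_op R" and RR: "R \<circ> R = (\<lambda>x. x - C x)"
  shows "R = sqrt_op"
proof
  fix v
  have pos: "Im (cinner x (R x)) = 0 \<and> 0 \<le> Re (cinner x (R x))" for x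
    using R_pos unfolding positive_op_def op_le_def by simp
  have RRx: "R (R x) = x - C x" for x using fun_cong[OF RR, of x] by simp
  have "R (C x) = C (R x)" for x
    using RRx[of "R x"] arg_cong[OF RRx[of x], of R] by (simp add: bounded_op_diff[OF R])
  then have RD: "R (sqrt_op x) = sqrt_op (R x)" for x by (rule sqrt_op_commute[OF R])
  define w where "w = R v - sqrt_op v"
  have "R w + sqrt_op w = 0"
    unfolding w_def by (simp add: bounded_op_diff[OF R] bounded_op_diff[OF bounded_op_sqrt_op] RRx sqrt_op_sqrt_op RD)
  then have "cinner w (R w) + cinner w (sqrt_op w) = 0"
    by (simp add: cinner_add_right[symmetric])
  then have "cinner w (R w) = 0" "cinner w (sqrt_op w) = 0"
    using pos[of w] sqrt_op_positive[of w] by (auto simp: complex_eq_iff)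
  then have "R w = 0" "sqrt_op w = 0"
    using positive_form_eq_0_imp_eq_0[OF R pos] positive_form_eq_0_imp_eq_0[OF bounded_op_sqrt_op sqrt_op_positive]
    by auto
  then have "cinner w w = 0"
    using selfadjoint_if_Im_cinner_eq_0[OF R] pos selfadjoint_sqrt_op unfolding w_def
    by (simp add: cinner_diff_left selfadjoint_def)
  then show "R v = sqrt_op v" unfolding w_def by simp
qed

lemma op_sqrt_eq_sqrt_op: "op_sqrt (\<lambda>x. x - C x) = sqrt_op"
  unfolding op_sqrt_def
proof (rule the_equality)
  show "bounded_op sqrt_op \<and> positive_op sqrt_op \<and> sqrt_op \<circ> sqrt_op = (\<lambda>x. x - C x)"
    using bounded_op_sqrt_op sqrt_op_positive by (auto simp: positive_op_def op_le_def sqrt_op_sqrt_op)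
qed (use positive_sqrt_unique in blast)

end

section \<open>Solving \<open>T = D X D\<close> with a contraction of numerical radius at most one\<close>

lemma le_mult_if_scaled_amgm_bound:
  fixes r a b :: real
  assumes h: "\<And>s. s > 0 \<Longrightarrow> 2 * r \<le> s * a\<^sup>2 + b\<^sup>2 / s" and a: "a \<ge> 0" and b: "b \<ge> 0"
  shows "r \<le> a * b"
proof (cases "a > 0 \<and> b > 0")
  case True
  have "2 * r \<le> (b / a) * a\<^sup>2 + b\<^sup>2 / (b / a)" using True by (intro h) simp
  also have "\<dots> = 2 * (a * b)" using True by (simp add: power2_eq_square field_simps)
  finally show ?thesis by simp
next
  case False
  then have "a = 0 \<or> b = 0" using a b by auto
  have "2 * r \<le> e" if e: "e > 0" for e
  proof -
    have pa: "a\<^sup>2 + 1 > 0" and pb: "b\<^sup>2 + 1 > 0"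
      using zero_le_power2[of a] zero_le_power2[of b] by linarith+
    show ?thesis
    proof (cases "a = 0")
      case True
      have "2 * r \<le> ((b\<^sup>2 + 1) / e) * a\<^sup>2 + b\<^sup>2 / ((b\<^sup>2 + 1) / e)" using e pb by (intro h) simp
      also have "\<dots> = e * (b\<^sup>2 / (b\<^sup>2 + 1))" using True e by (simp add: field_simps)
      also have "\<dots> \<le> e" using e pb by (intro mult_left_le) simp_all
      finally show ?thesis .
    next
      case False
      then have "b = 0" using \<open>a = 0 \<or> b = 0\<close> by simp
      have "2 * r \<le> (e / (a\<^sup>2 + 1)) * a\<^sup>2 + b\<^sup>2 / (e / (a\<^sup>2 + 1))" using e pa by (intro h) simp
      also have "\<dots> = e * (a\<^sup>2 / (a\<^sup>2 + 1))" using \<open>b = 0\<close> by simp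
      also have "\<dots> \<le> e" using e pa by (intro mult_left_le) simp_all
      finally show ?thesis .
    qed
  qed
  then have "2 * r \<le> 0" using field_le_epsilon[of "2 * r" 0] by simp
  then show ?thesis using \<open>a = 0 \<or> b = 0\<close> by auto
qed

lemma Re_cinner_le_if_form_bound:
  assumes T: "bounded_op T" "selfadjoint T" and D: "bounded_op D"
    and bound: "\<And>v. \<bar>Re (cinner v (T v))\<bar> \<le> (norm (D v))\<^sup>2"
  shows "Re (cinner y (T x)) \<le> ((norm (D y))\<^sup>2 + (norm (D x))\<^sup>2) / 2"
proof -
  have "Re (cinner x (T y)) = Re (cinner y (T x))"
    by (metis Re_cinner_commute T(2) selfadjointD)
  then have "4 * Re (cinner y (T x)) = Re (cinner (y + x) (T (y + x))) - Re (cinner (y - x) (T (y - x)))"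
    by (simp add: bounded_op_add[OF T(1)] bounded_op_diff[OF T(1)] cinner_add_left cinner_add_right
        cinner_diff_left cinner_diff_right)
  also have "\<dots> \<le> (norm (D (y + x)))\<^sup>2 + (norm (D (y - x)))\<^sup>2"
    using bound[of "y + x"] bound[of "y - x"] by linarith
  also have "\<dots> = 2 * (norm (D y))\<^sup>2 + 2 * (norm (D x))\<^sup>2"
    by (simp add: bounded_op_add[OF D] bounded_op_diff[OF D] parallelogram_law)
  finally show ?thesis by simp
qed

lemma cmod_cinner_le_if_form_bound:
  assumes T: "bounded_op T" "selfadjoint T" and D: "bounded_op D"
    and bound: "\<And>v. \<bar>Re (cinner v (T v))\<bar> \<le> (norm (D v))\<^sup>2"
  shows "cmod (cinner y (T x)) \<le> norm (D y) * norm (D x)"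
proof -
  \<comment> \<open>rescaling \<open>y \<mapsto> t y\<close>, \<open>x \<mapsto> x / t\<close> improves the arithmetic to the geometric mean\<close>
  have Re_le: "Re (cinner y (T x)) \<le> norm (D y) * norm (D x)" for x y
  proof (rule le_mult_if_scaled_amgm_bound)
    fix s :: real assume s: "s > 0"
    define t where "t = sqrt s"
    have t: "t > 0" "t * t = s" using s unfolding t_def by (auto simp: real_sqrt_mult[symmetric])
    have "Re (cinner (t *\<^sub>R y) (T ((1 / t) *\<^sub>R x))) = Re (cinner y (T x))"
      using t by (simp add: bounded_op_scaleR[OF T(1)] cinner_scaleR_left cinner_scaleR_right)
    moreover have "(norm (D (t *\<^sub>R y)))\<^sup>2 = s * (norm (D y))\<^sup>2"
      using t by (simp add: bounded_op_scaleR[OF D] power_mult_distrib power2_eq_square)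
    moreover have "(norm (D ((1 / t) *\<^sub>R x)))\<^sup>2 = (norm (D x))\<^sup>2 / s"
      using t by (simp add: bounded_op_scaleR[OF D] power_mult_distrib power2_eq_square)
    ultimately show "2 * Re (cinner y (T x)) \<le> s * (norm (D y))\<^sup>2 + (norm (D x))\<^sup>2 / s"
      using Re_cinner_le_if_form_bound[OF T D bound, of "t *\<^sub>R y" "(1 / t) *\<^sub>R x"] by simp
  qed simp_all
  show ?thesis
  proof (cases "cinner y (T x) = 0")
    case False
    \<comment> \<open>rotate \<open>y\<close> by a unimodular scalar to make \<open>\<langle>y, T x\<rangle>\<close> real and nonnegative\<close>
    define w where "w = cinner y (T x)"
    define c where "c = w / complex_of_real (cmod w)"
    have w: "cmod w > 0" using False unfolding w_def by simp
    have "cnj c * w = complex_of_real (cmod w)"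
      unfolding c_def using w complex_norm_square[of w] by (simp add: field_simps power2_eq_square)
    then have "cmod w = Re (cinner (cscale c y) (T x))" by (simp add: w_def cinner_cscale_left)
    also have "\<dots> \<le> norm (D (cscale c y)) * norm (D x)" by (rule Re_le)
    also have "norm (D (cscale c y)) = norm (D y)"
      using w by (simp add: bounded_op_cscale[OF D] norm_cscale c_def norm_divide)
    finally show ?thesis unfolding w_def .
  qed simp
qed

locale defect_factorization =
  fixes T D :: "'a::chilbert \<Rightarrow> 'a"
  assumes bounded_T: "bounded_op T" and selfadjoint_T: "selfadjoint T"
    and bounded_D: "bounded_op D" and selfadjoint_D: "selfadjoint D"
begin

lemma csubspace_range: "csubspace (range D)"
  unfolding csubspace_def
proof (intro conjI ballI allI)
  show "0 \<in> range D" using bounded_op_zero[OF bounded_D] by (metis rangeI)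
  show "u + v \<in> range D" if "u \<in> range D" "v \<in> range D" for u v
    using that by (auto simp: bounded_op_add[OF bounded_D, symmetric])
  show "cscale c u \<in> range D" if "u \<in> range D" for c u
    using that by (auto simp: bounded_op_cscale[OF bounded_D, symmetric])
qed

lemma csubspace_closure_range: "csubspace (closure (range D))"
  by (rule csubspace_closure[OF csubspace_range])

lemma in_closure_range: "D x \<in> closure (range D)"
  by (simp add: closure_subset[THEN subsetD])

lemma eq_0_if_orthogonal_range:
  assumes z: "z \<in> closure (range D)" and orth: "\<And>y. cinner z (D y) = 0"
  shows "z = 0"
proof -
  have "cmod (cinner z v) \<le> 0 * norm v" if "v \<in> range D" for v
    using orth that by auto
  then have "cmod (cinner z z) \<le> 0 * norm z" using z by (rule cmod_cinner_le_on_closure)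
  then show ?thesis by simp
qed

lemma eq_0_if_kernel: "z \<in> closure (range D) \<Longrightarrow> D z = 0 \<Longrightarrow> z = 0"
  by (rule eq_0_if_orthogonal_range) (simp_all add: selfadjointD[OF selfadjoint_D, symmetric])

lemma cinner_D_D: "cinner x (D (D x)) = complex_of_real ((norm (D x))\<^sup>2)"
  by (simp add: selfadjointD[OF selfadjoint_D, symmetric] cinner_self)

lemma form_bound_iff:
  "op_le (\<lambda>x. - T x) (D \<circ> D) \<and> op_le T (D \<circ> D) \<longleftrightarrow> (\<forall>v. \<bar>Re (cinner v (T v))\<bar> \<le> (norm (D v))\<^sup>2)"
proof -
  have "op_le (\<lambda>x. - T x) (D \<circ> D) \<longleftrightarrow> (\<forall>v. 0 \<le> Re (cinner v (T v)) + (norm (D v))\<^sup>2)"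
    using selfadjoint_Im_cinner[OF selfadjoint_T] by (simp add: op_le_def cinner_add_right cinner_D_D add.commute)
  moreover have "op_le T (D \<circ> D) \<longleftrightarrow> (\<forall>v. Re (cinner v (T v)) \<le> (norm (D v))\<^sup>2)"
    using selfadjoint_Im_cinner[OF selfadjoint_T] by (simp add: op_le_def cinner_diff_right cinner_D_D)
  moreover have "\<bar>r\<bar> \<le> n \<longleftrightarrow> 0 \<le> r + n \<and> r \<le> n" for r n :: real by linarith
  ultimately show ?thesis by blast
qed

lemma cinner_T_eq_cinner_X:
  assumes "\<forall>x. T x = D (X (D x))"
  shows "cinner x (T x) = cinner (D x) (X (D x))"
  using assms by (simp add: selfadjointD[OF selfadjoint_D])

lemma form_bound_if_factorization:
  assumes X: "bounded_op_on (closure (range D)) X" and nr: "numerical_radius (closure (range D)) X \<le> 1"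
    and TX: "\<forall>x. T x = D (X (D x))"
  shows "\<bar>Re (cinner v (T v))\<bar> \<le> (norm (D v))\<^sup>2"
proof -
  have "cmod (cinner v (T v)) \<le> numerical_radius (closure (range D)) X * (norm (D v))\<^sup>2"
    unfolding cinner_T_eq_cinner_X[OF TX]
    by (rule cmod_cinner_le_numerical_radius[OF X csubspace_closure_range in_closure_range])
  also have "\<dots> \<le> (norm (D v))\<^sup>2" using mult_right_mono[OF nr, of "(norm (D v))\<^sup>2"] by simp
  finally show ?thesis using abs_Re_le_cmod order_trans by blast
qed

definition is_lift :: "('a \<Rightarrow> 'a) \<Rightarrow> bool" where
  "is_lift Z \<longleftrightarrow> (\<forall>x. Z x \<in> closure (range D) \<and> D (Z x) = T x \<and> norm (Z x) \<le> norm (D x))"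

lemma lift_value_exists:
  assumes bound: "\<And>v. \<bar>Re (cinner v (T v))\<bar> \<le> (norm (D v))\<^sup>2"
  shows "\<exists>z. z \<in> closure (range D) \<and> D z = T x \<and> norm z \<le> norm (D x)"
proof -
  have KB: "cmod (cinner y (T x)) \<le> norm (D y) * norm (D x)" for y
    by (rule cmod_cinner_le_if_form_bound[OF bounded_T selfadjoint_T bounded_D bound])
  \<comment> \<open>\<open>D y \<mapsto> \<langle>T x, y\<rangle>\<close> is well defined and bounded by \<open>\<parallel>D x\<parallel>\<close> on \<open>range D\<close>\<close>
  define g where "g v = cinner (T x) (SOME y. D y = v)" for v
  have g: "g (D y) = cinner (T x) y" for y
  proof -
    define y' where "y' = (SOME y'. D y' = D y)"
    have "D y' = D y" unfolding y'_def by (rule someI[of "\<lambda>y'. D y' = D y" y]) simp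
    then have "norm (D (y' - y)) = 0" by (simp add: bounded_op_diff[OF bounded_D])
    then have "cmod (cinner (y' - y) (T x)) \<le> 0" using KB[of "y' - y"] by (metis mult_zero_left)
    then have "cinner (y' - y) (T x) = 0" by (rule norm_le_zero_iff[THEN iffD1])
    then have "cinner (T x) (y' - y) = 0" by (metis cinner_commute complex_cnj_zero)
    then show ?thesis unfolding g_def y'_def[symmetric] by (simp add: cinner_diff_right)
  qed
  have "\<exists>z\<in>closure (range D). (\<forall>v\<in>range D. g v = cinner z v) \<and> norm z \<le> norm (D x)"
  proof (rule riesz_representation_dense[OF csubspace_range])
    fix u v assume "u \<in> range D" "v \<in> range D"
    then obtain a b where "u = D a" "v = D b" by blast
    then show "g (u + v) = g u + g v"
      using g[of "a + b"] by (simp add: g cinner_add_right bounded_op_add[OF bounded_D])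
  next
    fix c u assume "u \<in> range D"
    then obtain a where "u = D a" by blast
    then show "g (cscale c u) = c * g u"
      using g[of "cscale c a"] by (simp add: g cinner_cscale_right bounded_op_cscale[OF bounded_D])
  next
    fix u assume "u \<in> range D"
    then obtain a where a: "u = D a" by blast
    have "cmod (g u) = cmod (cinner a (T x))" unfolding a g by (rule cmod_cinner_commute)
    also have "\<dots> \<le> norm (D x) * norm u" using KB[of a] by (simp add: a mult.commute)
    finally show "cmod (g u) \<le> norm (D x) * norm u" .
  qed simp
  then obtain z where z: "z \<in> closure (range D)" "\<And>y. g (D y) = cinner z (D y)" "norm z \<le> norm (D x)"
    by blast
  have "D z = T x"
  proof (rule cinner_ext)
    fix y
    show "cinner (D z) y = cinner (T x) y"
      using z(2)[of y] by (simp add: g selfadjointD[OF selfadjoint_D])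
  qed
  then show ?thesis using z by blast
qed

lemma lift_exists:
  assumes "\<And>v. \<bar>Re (cinner v (T v))\<bar> \<le> (norm (D v))\<^sup>2"
  shows "\<exists>Z. is_lift Z"
proof -
  have "\<forall>x. \<exists>z. z \<in> closure (range D) \<and> D z = T x \<and> norm z \<le> norm (D x)"
    using lift_value_exists[OF assms] by blast
  from choice[OF this] show ?thesis unfolding is_lift_def .
qed

lemma
  assumes Z: "is_lift Z"
  shows lift_add: "Z (x + y) = Z x + Z y"
    and lift_cscale: "Z (cscale c x) = cscale c (Z x)"
    and lift_cong: "D x = D x' \<Longrightarrow> Z x = Z x'"
proof -
  have ZM: "Z x \<in> closure (range D)" and DZ: "D (Z x) = T x" and Zn: "norm (Z x) \<le> norm (D x)" for x
    using Z unfolding is_lift_def by auto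
  note M = csubspace_closure_range
  show "Z (x + y) = Z x + Z y"
    using eq_0_if_kernel[of "Z (x + y) - (Z x + Z y)"] ZM
    by (simp add: csubspace_diff[OF M] csubspace_add[OF M] bounded_op_diff[OF bounded_D]
        bounded_op_add[OF bounded_D] bounded_op_add[OF bounded_T] DZ)
  show "Z (cscale c x) = cscale c (Z x)"
    using eq_0_if_kernel[of "Z (cscale c x) - cscale c (Z x)"] ZM
    by (simp add: csubspace_diff[OF M] csubspace_cscale[OF M] bounded_op_diff[OF bounded_D]
        bounded_op_cscale[OF bounded_D] bounded_op_cscale[OF bounded_T] DZ)
  have "Z (x - x') = Z x - Z x'"
    using eq_0_if_kernel[of "Z (x - x') - (Z x - Z x')"] ZM
    by (simp add: csubspace_diff[OF M] bounded_op_diff[OF bounded_D] bounded_op_diff[OF bounded_T] DZ)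
  moreover assume "D x = D x'"
  then have "Z (x - x') = 0" using Zn[of "x - x'"] by (simp add: bounded_op_diff[OF bounded_D])
  ultimately show "Z x = Z x'" by simp
qed

lemma lift_adjoint_value_exists:
  assumes Z: "is_lift Z"
  shows "\<exists>z. z \<in> closure (range D) \<and> (\<forall>y. cinner z (D y) = cinner u (Z y)) \<and> norm z \<le> norm u"
proof -
  have Zn: "norm (Z x) \<le> norm (D x)" for x
    using Z unfolding is_lift_def by auto
  \<comment> \<open>\<open>z\<close> represents the bounded functional \<open>D y \<mapsto> \<langle>u, Z y\<rangle>\<close> on \<open>range D\<close>\<close>
  define f where "f v = cinner u (Z (SOME y. D y = v))" for v
  have f: "f (D y) = cinner u (Z y)" for y
    unfolding f_def by (metis (mono_tags, lifting) lift_cong[OF Z] someI)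
  have "\<exists>z\<in>closure (range D). (\<forall>v\<in>range D. f v = cinner z v) \<and> norm z \<le> norm u"
  proof (rule riesz_representation_dense[OF csubspace_range])
    fix v w assume "v \<in> range D" "w \<in> range D"
    then obtain a b where "v = D a" "w = D b" by blast
    then show "f (v + w) = f v + f w"
      using f[of "a + b"] by (simp add: f lift_add[OF Z] cinner_add_right bounded_op_add[OF bounded_D])
  next
    fix c v assume "v \<in> range D"
    then obtain a where "v = D a" by blast
    then show "f (cscale c v) = c * f v"
      using f[of "cscale c a"] by (simp add: f lift_cscale[OF Z] cinner_cscale_right bounded_op_cscale[OF bounded_D])
  next
    fix v assume "v \<in> range D"
    then obtain a where "v = D a" by blast
    then show "cmod (f v) \<le> norm u * norm v"
      using cmod_cinner_le[of u "Z a"] mult_left_mono[OF Zn[of a] norm_ge_zero[of u]] by (simp add: f)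
  qed simp
  then show ?thesis by (auto simp: f)
qed

lemma factorization_if_lift:
  assumes Z: "is_lift Z"
  shows "\<exists>X. bounded_op_on (closure (range D)) X \<and> numerical_radius (closure (range D)) X \<le> 1
           \<and> (\<forall>x. T x = D (X (D x)))"
proof -
  have DZ: "D (Z x) = T x" for x
    using Z unfolding is_lift_def by auto
  note M = csubspace_closure_range
  have "\<forall>u. \<exists>z. z \<in> closure (range D) \<and> (\<forall>y. cinner z (D y) = cinner u (Z y)) \<and> norm z \<le> norm u"
    using lift_adjoint_value_exists[OF Z] by blast
  from choice[OF this] obtain X where XM: "\<And>u. X u \<in> closure (range D)"
    and XD: "\<And>u y. cinner (X u) (D y) = cinner u (Z y)" and Xn: "\<And>u. norm (X u) \<le> norm u"
    by blast
  have "bounded_op_on (closure (range D)) X"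
    unfolding bounded_op_on_def
  proof (intro conjI ballI allI exI[of _ 1])
    fix x y
    show "X (x + y) = X x + X y"
      using eq_0_if_orthogonal_range[of "X (x + y) - (X x + X y)"] XM
      by (simp add: csubspace_diff[OF M] csubspace_add[OF M] cinner_diff_left cinner_add_left XD)
  next
    fix c x
    show "X (cscale c x) = cscale c (X x)"
      using eq_0_if_orthogonal_range[of "X (cscale c x) - cscale c (X x)"] XM
      by (simp add: csubspace_diff[OF M] csubspace_cscale[OF M] cinner_diff_left cinner_cscale_left XD)
  qed (simp_all add: XM Xn)
  moreover have "numerical_radius (closure (range D)) X \<le> 1"
    using Xn by (intro numerical_radius_le) simp_all
  moreover have "T x = D (X (D x))" for x
  proof (rule cinner_ext)
    fix y
    have "cinner (T x) y = cinner x (D (Z y))"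
      by (simp add: selfadjointD[OF selfadjoint_T] DZ)
    also have "\<dots> = cinner (X (D x)) (D y)" by (simp add: XD selfadjointD[OF selfadjoint_D])
    also have "\<dots> = cinner (D (X (D x))) y" by (simp add: selfadjointD[OF selfadjoint_D])
    finally show "cinner (T x) y = cinner (D (X (D x))) y" .
  qed
  ultimately show ?thesis by blast
qed

theorem factorization_iff_form_bound:
  "(\<exists>X. bounded_op_on (closure (range D)) X \<and> numerical_radius (closure (range D)) X \<le> 1
        \<and> (\<forall>x. T x = D (X (D x))))
   \<longleftrightarrow> op_le (\<lambda>x. - T x) (D \<circ> D) \<and> op_le T (D \<circ> D)"
  unfolding form_bound_iff
proof
  assume "\<exists>X. bounded_op_on (closure (range D)) X \<and> numerical_radius (closure (range D)) X \<le> 1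
        \<and> (\<forall>x. T x = D (X (D x)))"
  then show "\<forall>v. \<bar>Re (cinner v (T v))\<bar> \<le> (norm (D v))\<^sup>2"
    using form_bound_if_factorization by blast
next
  assume "\<forall>v. \<bar>Re (cinner v (T v))\<bar> \<le> (norm (D v))\<^sup>2"
  then obtain Z where "is_lift Z" using lift_exists by blast
  then show "\<exists>X. bounded_op_on (closure (range D)) X \<and> numerical_radius (closure (range D)) X \<le> 1
        \<and> (\<forall>x. T x = D (X (D x)))"
    by (rule factorization_if_lift)
qed

theorem factorization_unique:
  assumes X: "bounded_op_on (closure (range D)) X" "\<forall>x. T x = D (X (D x))"
    and Y: "bounded_op_on (closure (range D)) Y" "\<forall>x. T x = D (Y (D x))"
    and u: "u \<in> closure (range D)"
  shows "X u = Y u"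
proof -
  note M = csubspace_closure_range
  have "X (D x) - Y (D x) = 0" for x
    using eq_0_if_kernel[of "X (D x) - Y (D x)"] X Y
    by (simp add: csubspace_diff[OF M] bounded_op_on_in in_closure_range bounded_op_diff[OF bounded_D])
  moreover have "continuous_on (closure (range D)) (\<lambda>u. X u - Y u)"
    using bounded_op_on_continuous_on[OF X(1) M] bounded_op_on_continuous_on[OF Y(1) M]
    by (intro continuous_on_diff)
  ultimately have "(\<lambda>u. X u - Y u) ` closure (range D) \<subseteq> {0}"
    by (intro image_closure_subset) auto
  then show ?thesis using u by auto
qed

theorem factorization_positive_iff:
  assumes X: "bounded_op_on (closure (range D)) X" "\<forall>x. T x = D (X (D x))"
  shows "positive_on (closure (range D)) X \<longleftrightarrow> (\<forall>x. Im (cinner x (T x)) = 0 \<and> 0 \<le> Re (cinner x (T x)))"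
proof
  assume "positive_on (closure (range D)) X"
  then show "\<forall>x. Im (cinner x (T x)) = 0 \<and> 0 \<le> Re (cinner x (T x))"
    unfolding positive_on_def cinner_T_eq_cinner_X[OF X(2)] using in_closure_range by blast
next
  assume "\<forall>x. Im (cinner x (T x)) = 0 \<and> 0 \<le> Re (cinner x (T x))"
  then have "(\<lambda>u. cinner u (X u)) ` range D \<subseteq> {z. Im z = 0 \<and> 0 \<le> Re z}"
    unfolding cinner_T_eq_cinner_X[OF X(2)] by auto
  moreover have "closed {z :: complex. Im z = 0 \<and> 0 \<le> Re z}"
    by (intro closed_Collect_conj closed_Collect_eq closed_Collect_le continuous_intros)
  ultimately have "(\<lambda>u. cinner u (X u)) ` closure (range D) \<subseteq> {z. Im z = 0 \<and> 0 \<le> Re z}"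
    using bounded_bilinear.continuous_on[OF bounded_bilinear_cinner continuous_on_id
        bounded_op_on_continuous_on[OF X(1) csubspace_closure_range]]
    by (intro image_closure_subset)
  then show "positive_on (closure (range D)) X" unfolding positive_on_def by auto
qed

end

section \<open>The defect operator and the main theorem\<close>

lemma
  assumes P: "bounded_op P" and P_le: "\<And>x. norm (P x) \<le> norm x"
  shows bounded_op_defect_op: "bounded_op (defect_op P)"
    and selfadjoint_defect_op: "selfadjoint (defect_op P)"
proof -
  have "selfadjoint_contraction (\<lambda>x. adj P (P x))"
  proof
    show "bounded_op (\<lambda>x. adj P (P x))" by (rule bounded_op_compose[OF bounded_op_adj[OF P] P])
    show "selfadjoint (\<lambda>x. adj P (P x))" by (rule selfadjoint_adj_comp[OF P])
    show "norm (adj P (P x)) \<le> norm x" for x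
      using norm_adj_le[OF P P_le, of "P x"] P_le[of x] by linarith
  qed
  then interpret selfadjoint_contraction "\<lambda>x. adj P (P x)" .
  have "defect_op P = sqrt_op"
    unfolding defect_op_def by (rule op_sqrt_eq_sqrt_op)
  then show "bounded_op (defect_op P)" "selfadjoint (defect_op P)"
    using bounded_op_sqrt_op selfadjoint_sqrt_op by simp_all
qed

lemma
  assumes A: "bounded_op A" and S: "bounded_op S"
  shows bounded_op_spherical_defect: "bounded_op (\<lambda>x. x - adj A (A x) - cscale (1/4) (adj S (S x)))"
    and selfadjoint_spherical_defect: "selfadjoint (\<lambda>x. x - adj A (A x) - cscale (1/4) (adj S (S x)))"
proof -
  have AA: "bounded_op (\<lambda>x. adj A (A x))" by (rule bounded_op_compose[OF bounded_op_adj[OF A] A])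
  have SS: "bounded_op (\<lambda>x. cscale (1/4) (adj S (S x)))"
    by (rule bounded_op_cscale_op[OF bounded_op_compose[OF bounded_op_adj[OF S] S]])
  show "bounded_op (\<lambda>x. x - adj A (A x) - cscale (1/4) (adj S (S x)))"
    by (rule bounded_op_diff_op[OF bounded_op_diff_op[OF bounded_op_id AA] SS])
  have "cnj (1/4 :: complex) = 1/4" by simp
  then show "selfadjoint (\<lambda>x. x - adj A (A x) - cscale (1/4) (adj S (S x)))"
    unfolding selfadjoint_def
    by (simp only: cinner_diff_left cinner_diff_right cinner_cscale_left cinner_cscale_right
        selfadjointD[OF selfadjoint_adj_comp[OF A]] selfadjointD[OF selfadjoint_adj_comp[OF S]] simp_thms)
qed

theorem mainTheorem7:
  fixes A S P :: "'a::chilbert \<Rightarrow> 'a"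
  assumes "P_contraction A S P"
  defines "T \<equiv> (\<lambda>x. x - adj A (A x) - cscale (1/4) (adj S (S x)))"
    and "D \<equiv> defect_op P"
    and "M \<equiv> defect_space P"
  shows "((\<exists>X. bounded_op_on M X \<and> numerical_radius M X \<le> 1 \<and> (\<forall>x. T x = D (X (D x))))
           \<longleftrightarrow> (op_le (\<lambda>x. - T x) (D \<circ> D) \<and> op_le T (D \<circ> D)))
    \<and> (\<forall>X Y. bounded_op_on M X \<and> numerical_radius M X \<le> 1 \<and> (\<forall>x. T x = D (X (D x))) \<longrightarrow>
              bounded_op_on M Y \<and> numerical_radius M Y \<le> 1 \<and> (\<forall>x. T x = D (Y (D x))) \<longrightarrow>
              (\<forall>x\<in>M. X x = Y x))
    \<and> (\<forall>X. bounded_op_on M X \<and> numerical_radius M X \<le> 1 \<and> (\<forall>x. T x = D (X (D x))) \<longrightarrow>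
           (positive_on M X \<longleftrightarrow>
              op_le (\<lambda>x. adj A (A x) + cscale (1/4) (adj S (S x))) id))"
proof -
  note bounded = P_contraction_bounded_op[OF assms(1)]
  interpret defect_factorization T D
    unfolding T_def D_def
    by unfold_locales (simp_all add: bounded_op_spherical_defect selfadjoint_spherical_defect
        bounded_op_defect_op selfadjoint_defect_op bounded P_contraction_norm_le[OF assms(1)])
  have M: "M = closure (range D)" unfolding M_def D_def defect_space_def ..
  have "op_le (\<lambda>x. adj A (A x) + cscale (1/4) (adj S (S x))) id
      \<longleftrightarrow> (\<forall>x. Im (cinner x (T x)) = 0 \<and> 0 \<le> Re (cinner x (T x)))"
    unfolding op_le_def T_def by (simp add: diff_diff_eq)
  then show ?thesis
    unfolding M using factorization_iff_form_bound factorization_unique factorization_positive_iff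
    by blast
qed

end
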